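(* Stuttering $H_\mu$ with unique stuttering and full basis is at least as expressive as mumbling $H_\mu$ with unique mumbling and full basis.
   Context: Fix a finite set $\mathit{AP}$. A trace is an infinite sequence $P_0m_0P_1m_1\dots$ with $P_i\subseteq\mathit{AP}$, $m_i\in\{\mathit{int},\mathit{call},\mathit{ret}\}$; $\mathit{tr}(i)=P_i$. Successor functions: $\mathit{succ}_\mathsf{g}(\mathit{tr},i)=i+1$; $\mathit{succ}_\mathsf{a}(\mathit{tr},i)=i+1$ if $m_i=\mathit{int}$, and if $m_i=\mathit{call}$ the least $j>i$ such that among $m_i,\dots,m_{j-1}$ the numbers of $\mathit{call}$ and $\mathit{ret}$ coincide (undefined if none), undefined if $m_i=\mathit{ret}$; $\mathit{succ}_\mathsf{c}(\mathit{tr},i)$ the largest $j<i$ with $m_j=\mathit{call}$ such that among $m_{j+1},\dots,m_{i-1}$ the numbers of $\mathit{call}$ and $\mathit{ret}$ coincide (undefined if none). Mumbling $H_\mu$: trace formulae $\delta ::= \mathit{ap}\mid Y\mid\delta\lor\delta\mid\lnot\delta\mid\bigcirc^\mathsf{f}\delta\mid\mu Y.\delta$ ($\mathsf{f}\in\{\mathsf{g},\mathsf{a},\mathsf{c}\}$); multitrace formulae $\psi ::= [\delta]_\pi\mid X\mid\psi\lor\psi\mid\lnot\psi\mid\bigcirc^\Delta\psi\mid\mu X.\psi$ with $\Delta$ mapping trace variables to trace formulae; hyperproperty formulae $\varphi ::= \exists\pi.\varphi\mid\forall\pi.\varphi\mid\psi$; fixpoint variables occur positively; closed = all variables bound. Trace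 semantics $\llbracket\delta\rrbracket^{\mathit{tr}}_{\mathcal{V}}\subseteq\mathbb{N}_0$: $\mathit{ap}\mapsto\{i\mid\mathit{ap}\in\mathit{tr}(i)\}$, $Y\mapsto\mathcal{V}(Y)$, union, complement, $\bigcirc^\mathsf{f}\delta\mapsto\{i\mid\mathit{succ}_\mathsf{f}(\mathit{tr},i)$ defined and in $\llbracket\delta\rrbracket\}$, $\mu Y.\delta\mapsto\bigcap\{I\mid\llbracket\delta\rrbracket_{\mathcal{V}[Y\mapsto I]}\subseteq I\}$. $\mathit{succ}_\delta(\mathit{tr},i)=\min\{j>i\mid j\in\llbracket\delta\rrbracket^{\mathit{tr}}\}$ if nonempty, else $i+1$; $\mathit{succ}_\Delta(\Pi,v)$ componentwise for a trace assignment $\Pi$ on $\pi_1,\dots,\pi_n$. $\llbracket\psi\rrbracket^\Pi_{\mathcal{W}}\subseteq\mathbb{N}_0^n$: $[\delta]_{\pi_j}\mapsto\{v\mid v_j\in\llbracket\delta\rrbracket^{\Pi(\pi_j)}\}$, $X\mapsto\mathcal{W}(X)$, Boolean as usual, $\bigcirc^\Delta\psi\mapsto\{v\mid\mathit{succ}_\Delta(\Pi,v)\in\llbracket\psi\rrbracket\}$, $\mu X$ least fixpoint. $\Pi\models_\mathcal{T}\exists\pi.\varphi$ iff some $\mathit{tr}\in\mathcal{T}$ gives $\Pi[\pi\mapsto\mathit{tr}]\models_\mathcal{T}\varphi$; $\forall$ for all; $\Pi\models_\mathcal{T}\psi$ iff $(0,\dots,0)\in\llbracket\psi\rrbracket^\Pi$.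 For closed $\varphi$ and a set of traces $\mathcal{T}$, $\mathcal{T}\models\varphi$ iff the empty assignment satisfies $\varphi$ over $\mathcal{T}$. Stuttering $H_\mu$ is identical except that multitrace next operators are $\bigcirc^\Gamma\psi$ with $\Gamma$ mapping each trace variable to a finite set of trace formulae; for a finite set $\gamma$, $\mathit{succ}_\gamma(\mathit{tr},i)=\min\{j>i\mid$ for some $\delta\in\gamma$: $i\in\llbracket\delta\rrbracket^{\mathit{tr}}\not\Leftrightarrow j\in\llbracket\delta\rrbracket^{\mathit{tr}}\}$ if nonempty, else $i+1$; $\mathit{succ}_\Gamma$ componentwise and $\llbracket\bigcirc^\Gamma\psi\rrbracket=\{v\mid\mathit{succ}_\Gamma(\Pi,v)\in\llbracket\psi\rrbracket\}$. Unique mumbling (stuttering): all multitrace next operators use the same $\Delta$ ($\Gamma$). Full basis: no restriction on the trace formulae used in tests and in $\Delta$/$\Gamma$. $L_1$ is at least as expressive as $L_2$ if for every closed hyperproperty formula $\varphi$ of $L_2$ there is a closed $\varphi'$ of $L_1$ with $\mathcal{T}\models\varphi$ iff $\mathcal{T}\models\varphi'$ for all sets of traces $\mathcal{T}$. *)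

theory Defs
  imports Main
begin

datatype mode = MInt | MCall | MRet

text \<open>A trace P0 m0 P1 m1 ... over atomic propositions of the finite type 'ap:
  position i carries the pair (P_i, m_i).\<close>
type_synonym 'ap trace = "nat \<Rightarrow> 'ap set \<times> mode"

definition tr_at :: "'ap trace \<Rightarrow> nat \<Rightarrow> 'ap set" where
  "tr_at tr i = fst (tr i)"

definition md :: "'ap trace \<Rightarrow> nat \<Rightarrow> mode" where
  "md tr i = snd (tr i)"

definition balanced :: "'ap trace \<Rightarrow> nat \<Rightarrow> nat \<Rightarrow> bool" where
  "balanced tr i j \<longleftrightarrow>
     card {k. i \<le> k \<and> k < j \<and> md tr k = MCall} = card {k. i \<le> k \<and> k < j \<and> md tr k = MRet}"

datatype succ_kind = SG | SA | SC

fun succ_f :: "succ_kind \<Rightarrow> 'ap trace \<Rightarrow> nat \<Rightarrow> nat option" where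
  "succ_f SG tr i = Some (Suc i)"
| "succ_f SA tr i =
     (case md tr i of
        MInt \<Rightarrow> Some (Suc i)
      | MCall \<Rightarrow> (if \<exists>j>i. balanced tr i j then Some (LEAST j. i < j \<and> balanced tr i j) else None)
      | MRet \<Rightarrow> None)"
| "succ_f SC tr i =
     (if \<exists>j<i. md tr j = MCall \<and> balanced tr (Suc j) i
      then Some (GREATEST j. j < i \<and> md tr j = MCall \<and> balanced tr (Suc j) i) else None)"

datatype 'ap tf =
    TAP 'ap
  | TVar nat
  | TOr "'ap tf" "'ap tf"
  | TNot "'ap tf"
  | TNext succ_kind "'ap tf"
  | TMu nat "'ap tf"

fun tsem :: "'ap trace \<Rightarrow> (nat \<Rightarrow> nat set) \<Rightarrow> 'ap tf \<Rightarrow> nat set" where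
  "tsem tr V (TAP a) = {i. a \<in> tr_at tr i}"
| "tsem tr V (TVar Y) = V Y"
| "tsem tr V (TOr d1 d2) = tsem tr V d1 \<union> tsem tr V d2"
| "tsem tr V (TNot d) = - tsem tr V d"
| "tsem tr V (TNext f d) = {i. \<exists>j. succ_f f tr i = Some j \<and> j \<in> tsem tr V d}"
| "tsem tr V (TMu Y d) = \<Inter> {I. tsem tr (V(Y := I)) d \<subseteq> I}"

fun tfv :: "'ap tf \<Rightarrow> nat set" where
  "tfv (TAP a) = {}"
| "tfv (TVar Y) = {Y}"
| "tfv (TOr d1 d2) = tfv d1 \<union> tfv d2"
| "tfv (TNot d) = tfv d"
| "tfv (TNext f d) = tfv d"
| "tfv (TMu Y d) = tfv d - {Y}"

text \<open>tpol p Y d: every free occurrence of Y in d is under an even (p = True)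
  resp. odd (p = False) number of negations.\<close>
fun tpol :: "bool \<Rightarrow> nat \<Rightarrow> 'ap tf \<Rightarrow> bool" where
  "tpol p Y (TAP a) = True"
| "tpol p Y (TVar Z) = (p \<or> Z \<noteq> Y)"
| "tpol p Y (TOr d1 d2) = (tpol p Y d1 \<and> tpol p Y d2)"
| "tpol p Y (TNot d) = tpol (\<not> p) Y d"
| "tpol p Y (TNext f d) = tpol p Y d"
| "tpol p Y (TMu Z d) = (Z = Y \<or> tpol p Y d)"

fun twf :: "'ap tf \<Rightarrow> bool" where
  "twf (TAP a) = True"
| "twf (TVar Y) = True"
| "twf (TOr d1 d2) = (twf d1 \<and> twf d2)"
| "twf (TNot d) = twf d"
| "twf (TNext f d) = twf d"
| "twf (TMu Y d) = (tpol True Y d \<and> twf d)"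

definition tf_ok :: "'ap tf \<Rightarrow> bool" where
  "tf_ok d \<longleftrightarrow> twf d \<and> tfv d = {}"

text \<open>The next operator carries a map from trace variables to labels 'n:
  for mumbling 'n = 'ap tf (a map Delta), for stuttering 'n = 'ap tf list
  (a map Gamma to finite sets of trace formulae, represented by lists).\<close>
datatype ('ap, 'n) mf =
    MTest "'ap tf" nat
  | MVar nat
  | MOr "('ap, 'n) mf" "('ap, 'n) mf"
  | MNot "('ap, 'n) mf"
  | MNext "nat \<Rightarrow> 'n" "('ap, 'n) mf"
  | MMu nat "('ap, 'n) mf"

datatype ('ap, 'n) hf =
    HEx nat "('ap, 'n) hf"
  | HAll nat "('ap, 'n) hf"
  | HBody "('ap, 'n) mf"

text \<open>A trace assignment is partial (None = unassigned); positions v assign a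
  position to every trace variable (only assigned ones matter).\<close>
type_synonym 'ap tassign = "nat \<Rightarrow> 'ap trace option"

definition succ_vec ::
  "('ap trace \<Rightarrow> 'n \<Rightarrow> nat \<Rightarrow> nat) \<Rightarrow> 'ap tassign \<Rightarrow> (nat \<Rightarrow> 'n) \<Rightarrow> (nat \<Rightarrow> nat) \<Rightarrow> (nat \<Rightarrow> nat)" where
  "succ_vec sN \<Pi> D v = (\<lambda>\<pi>. case \<Pi> \<pi> of Some tr \<Rightarrow> sN tr (D \<pi>) (v \<pi>) | None \<Rightarrow> v \<pi>)"

fun msem :: "('ap trace \<Rightarrow> 'n \<Rightarrow> nat \<Rightarrow> nat) \<Rightarrow> 'ap tassign \<Rightarrow> (nat \<Rightarrow> (nat \<Rightarrow> nat) set)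
              \<Rightarrow> ('ap, 'n) mf \<Rightarrow> (nat \<Rightarrow> nat) set" where
  "msem sN \<Pi> W (MTest d \<pi>) =
     {v. case \<Pi> \<pi> of Some tr \<Rightarrow> v \<pi> \<in> tsem tr (\<lambda>_. {}) d | None \<Rightarrow> False}"
| "msem sN \<Pi> W (MVar X) = W X"
| "msem sN \<Pi> W (MOr p q) = msem sN \<Pi> W p \<union> msem sN \<Pi> W q"
| "msem sN \<Pi> W (MNot p) = - msem sN \<Pi> W p"
| "msem sN \<Pi> W (MNext D p) = {v. succ_vec sN \<Pi> D v \<in> msem sN \<Pi> W p}"
| "msem sN \<Pi> W (MMu X p) = \<Inter> {I. msem sN \<Pi> (W(X := I)) p \<subseteq> I}"

fun hsat :: "('ap trace \<Rightarrow> 'n \<Rightarrow> nat \<Rightarrow> nat) \<Rightarrow> 'ap trace set \<Rightarrow> 'ap tassign \<Rightarrow> ('ap, 'n) hf \<Rightarrow> bool" where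
  "hsat sN T \<Pi> (HEx \<pi> p) = (\<exists>tr\<in>T. hsat sN T (\<Pi>(\<pi> := Some tr)) p)"
| "hsat sN T \<Pi> (HAll \<pi> p) = (\<forall>tr\<in>T. hsat sN T (\<Pi>(\<pi> := Some tr)) p)"
| "hsat sN T \<Pi> (HBody p) = ((\<lambda>_. 0) \<in> msem sN \<Pi> (\<lambda>_. {}) p)"

definition hmodels :: "('ap trace \<Rightarrow> 'n \<Rightarrow> nat \<Rightarrow> nat) \<Rightarrow> 'ap trace set \<Rightarrow> ('ap, 'n) hf \<Rightarrow> bool" where
  "hmodels sN T p \<longleftrightarrow> hsat sN T (\<lambda>_. None) p"

fun mfv :: "('ap, 'n) mf \<Rightarrow> nat set" where
  "mfv (MTest d \<pi>) = {}"
| "mfv (MVar X) = {X}"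
| "mfv (MOr p q) = mfv p \<union> mfv q"
| "mfv (MNot p) = mfv p"
| "mfv (MNext D p) = mfv p"
| "mfv (MMu X p) = mfv p - {X}"

fun mpol :: "bool \<Rightarrow> nat \<Rightarrow> ('ap, 'n) mf \<Rightarrow> bool" where
  "mpol p X (MTest d \<pi>) = True"
| "mpol p X (MVar Z) = (p \<or> Z \<noteq> X)"
| "mpol p X (MOr a b) = (mpol p X a \<and> mpol p X b)"
| "mpol p X (MNot a) = mpol (\<not> p) X a"
| "mpol p X (MNext D a) = mpol p X a"
| "mpol p X (MMu Z a) = (Z = X \<or> mpol p X a)"

fun mwf :: "('n \<Rightarrow> bool) \<Rightarrow> nat set \<Rightarrow> ('ap, 'n) mf \<Rightarrow> bool" where
  "mwf lok B (MTest d \<pi>) = (\<pi> \<in> B \<and> tf_ok d)"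
| "mwf lok B (MVar X) = True"
| "mwf lok B (MOr p q) = (mwf lok B p \<and> mwf lok B q)"
| "mwf lok B (MNot p) = mwf lok B p"
| "mwf lok B (MNext D p) = ((\<forall>\<pi>\<in>B. lok (D \<pi>)) \<and> mwf lok B p)"
| "mwf lok B (MMu X p) = (mpol True X p \<and> mwf lok B p)"

fun hclosed_in :: "('n \<Rightarrow> bool) \<Rightarrow> nat set \<Rightarrow> ('ap, 'n) hf \<Rightarrow> bool" where
  "hclosed_in lok B (HEx \<pi> p) = hclosed_in lok (insert \<pi> B) p"
| "hclosed_in lok B (HAll \<pi> p) = hclosed_in lok (insert \<pi> B) p"
| "hclosed_in lok B (HBody p) = (mwf lok B p \<and> mfv p = {})"

definition hclosed :: "('n \<Rightarrow> bool) \<Rightarrow> ('ap, 'n) hf \<Rightarrow> bool" where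
  "hclosed lok p \<longleftrightarrow> hclosed_in lok {} p"

fun mnexts :: "('ap, 'n) mf \<Rightarrow> (nat \<Rightarrow> 'n) set" where
  "mnexts (MTest d \<pi>) = {}"
| "mnexts (MVar X) = {}"
| "mnexts (MOr p q) = mnexts p \<union> mnexts q"
| "mnexts (MNot p) = mnexts p"
| "mnexts (MNext D p) = insert D (mnexts p)"
| "mnexts (MMu X p) = mnexts p"

fun hvars :: "('ap, 'n) hf \<Rightarrow> nat set" where
  "hvars (HEx \<pi> p) = insert \<pi> (hvars p)"
| "hvars (HAll \<pi> p) = insert \<pi> (hvars p)"
| "hvars (HBody p) = {}"

fun hbody :: "('ap, 'n) hf \<Rightarrow> ('ap, 'n) mf" where
  "hbody (HEx \<pi> p) = hbody p"
| "hbody (HAll \<pi> p) = hbody p"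
| "hbody (HBody p) = p"

definition hunique :: "('n \<Rightarrow> 'n \<Rightarrow> bool) \<Rightarrow> ('ap, 'n) hf \<Rightarrow> bool" where
  "hunique leq p \<longleftrightarrow>
     (\<forall>D1\<in>mnexts (hbody p). \<forall>D2\<in>mnexts (hbody p). \<forall>\<pi>\<in>hvars p. leq (D1 \<pi>) (D2 \<pi>))"

definition succ_mumble :: "'ap trace \<Rightarrow> 'ap tf \<Rightarrow> nat \<Rightarrow> nat" where
  "succ_mumble tr d i =
     (if \<exists>j>i. j \<in> tsem tr (\<lambda>_. {}) d then (LEAST j. i < j \<and> j \<in> tsem tr (\<lambda>_. {}) d) else Suc i)"

definition succ_stutter :: "'ap trace \<Rightarrow> 'ap tf list \<Rightarrow> nat \<Rightarrow> nat" where
  "succ_stutter tr g i =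
     (if \<exists>j>i. \<exists>d\<in>set g. (i \<in> tsem tr (\<lambda>_. {}) d) \<noteq> (j \<in> tsem tr (\<lambda>_. {}) d)
      then (LEAST j. i < j \<and> (\<exists>d\<in>set g. (i \<in> tsem tr (\<lambda>_. {}) d) \<noteq> (j \<in> tsem tr (\<lambda>_. {}) d)))
      else Suc i)"

type_synonym 'ap mumbling_hf = "('ap, 'ap tf) hf"
type_synonym 'ap stuttering_hf = "('ap, 'ap tf list) hf"

definition mumbling_closed :: "'ap mumbling_hf \<Rightarrow> bool" where
  "mumbling_closed p \<longleftrightarrow> hclosed tf_ok p"

definition stuttering_closed :: "'ap stuttering_hf \<Rightarrow> bool" where
  "stuttering_closed p \<longleftrightarrow> hclosed (\<lambda>g. \<forall>d\<in>set g. tf_ok d) p"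

definition unique_mumbling :: "'ap mumbling_hf \<Rightarrow> bool" where
  "unique_mumbling p \<longleftrightarrow> hunique (=) p"

definition unique_stuttering :: "'ap stuttering_hf \<Rightarrow> bool" where
  "unique_stuttering p \<longleftrightarrow> hunique (\<lambda>g1 g2. set g1 = set g2) p"

definition mumbling_models :: "'ap trace set \<Rightarrow> 'ap mumbling_hf \<Rightarrow> bool" where
  "mumbling_models T p \<longleftrightarrow> hmodels succ_mumble T p"

definition stuttering_models :: "'ap trace set \<Rightarrow> 'ap stuttering_hf \<Rightarrow> bool" where
  "stuttering_models T p \<longleftrightarrow> hmodels succ_stutter T p"

end

theory Submission
  imports Defs
begin

text \<open>Under unique mumbling all next operators move a trace \<open>\<pi>\<close> along the same formula
  \<open>\<Delta> \<pi>\<close>, so only the positions \<open>0 = m\<^sub>0 < m\<^sub>1 < \<dots>\<close> of the \<open>\<Delta> \<pi>\<close>-mumbling run are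
  ever visited: transferring along \<open>n \<mapsto> (m\<^sub>n)\<^sub>\<pi>\<close>, the body becomes a formula over discrete time
  \<open>0, 1, 2, \<dots>\<close> whose tests read \<open>\<pi>\<close> at \<open>m\<^sub>n\<close>. Stuttering with a single basis \<open>\<Gamma> \<pi>\<close>
  reduces in the same way, to positions \<open>0 = s\<^sub>0 < s\<^sub>1 < \<dots>\<close>.

  We take for \<open>\<Gamma> \<pi>\<close> the formulas ``\<open>\<theta>\<close> holds at the next \<open>\<Delta> \<pi>\<close>-stop'', one for each test
  \<open>\<theta>\<close> on \<open>\<pi>\<close>, together with ``the run of consecutive stops at which no test changes,
  starting at the next stop, has even length''. These formulas depend only on the next stop, so a
  stutter step never ends strictly between two stops, and it ends at the next stop as soon as one
  of them changes there. If none changes, the parity formula forces the tests to stay constant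
  forever. Hence, for \<open>n \<ge> 1\<close>, the test \<open>\<theta>\<close> at \<open>m\<^sub>n\<close> agrees with ``\<open>\<theta>\<close> at the first stop from
  \<open>s\<^sub>n\<close> on'', evaluated at \<open>s\<^sub>n\<close>. Position 0 need not be a stop, so the translated body
  keeps the original tests up to the first next operator and unfolds each fixpoint there once: a
  least fixpoint never needs to revisit position 0.\<close>

section \<open>Multitrace formulae over an abstract successor structure\<close>

fun mf_sem :: "((nat \<Rightarrow> 'n) \<Rightarrow> 'v \<Rightarrow> 'v) \<Rightarrow> ('ap tf \<Rightarrow> nat \<Rightarrow> 'v set) \<Rightarrow> (nat \<Rightarrow> 'v set)
    \<Rightarrow> ('ap, 'n) mf \<Rightarrow> 'v set" where
  "mf_sem s tv W (MTest d \<pi>) = tv d \<pi>"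
| "mf_sem s tv W (MVar X) = W X"
| "mf_sem s tv W (MOr p q) = mf_sem s tv W p \<union> mf_sem s tv W q"
| "mf_sem s tv W (MNot p) = - mf_sem s tv W p"
| "mf_sem s tv W (MNext D p) = {v. s D v \<in> mf_sem s tv W p}"
| "mf_sem s tv W (MMu X p) = \<Inter> {I. mf_sem s tv (W(X := I)) p \<subseteq> I}"

definition mtest_sem :: "'ap tassign \<Rightarrow> 'ap tf \<Rightarrow> nat \<Rightarrow> (nat \<Rightarrow> nat) set" where
  "mtest_sem \<Pi> d \<pi> = {v. case \<Pi> \<pi> of Some tr \<Rightarrow> v \<pi> \<in> tsem tr (\<lambda>_. {}) d | None \<Rightarrow> False}"

lemma msem_eq_mf_sem: "msem sN \<Pi> W \<psi> = mf_sem (succ_vec sN \<Pi>) (mtest_sem \<Pi>) W \<psi>"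
  by (induction \<psi> arbitrary: W) (auto simp: mtest_sem_def)

lemma mf_sem_MMu: "mf_sem s tv W (MMu X p) = lfp (\<lambda>I. mf_sem s tv (W(X := I)) p)"
  by (simp add: lfp_def Inf_set_def)

lemma mf_sem_cong_env: "\<forall>X\<in>mfv \<psi>. W X = W' X \<Longrightarrow> mf_sem s tv W \<psi> = mf_sem s tv W' \<psi>"
proof (induction \<psi> arbitrary: W W')
  case (MMu X p)
  have "mf_sem s tv (W(X := I)) p = mf_sem s tv (W'(X := I)) p" for I
    using MMu by (intro MMu.IH) auto
  then show ?case by simp
next
  case (MOr a b)
  then show ?case by (metis UnCI mf_sem.simps(3) mfv.simps(3))
next
  case (MNot a)
  then show ?case by simp
next
  case (MNext D a)
  then have "mf_sem s tv W a = mf_sem s tv W' a" by simp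
  then show ?case by simp
qed auto

lemma mf_sem_closed: "mfv \<phi> = {} \<Longrightarrow> mf_sem s tv W \<phi> = mf_sem s tv W' \<phi>"
  by (rule mf_sem_cong_env) simp

lemma mf_sem_mpol_mono:
  assumes "mpol p X \<psi>" "I \<subseteq> J"
  shows "(p \<longrightarrow> mf_sem s tv (W(X := I)) \<psi> \<subseteq> mf_sem s tv (W(X := J)) \<psi>) \<and>
         (\<not> p \<longrightarrow> mf_sem s tv (W(X := J)) \<psi> \<subseteq> mf_sem s tv (W(X := I)) \<psi>)"
  using assms(1)
proof (induction \<psi> arbitrary: p W)
  case (MVar Z)
  show ?case
  proof (cases "Z = X")
    case True
    with MVar have p by simp
    with True assms(2) show ?thesis by simp
  qed simp
next
  case (MOr a b)
  then have "mpol p X a" "mpol p X b" by simp_all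
  with MOr.IH[of p W] show ?case by (cases p) auto
next
  case (MNot a)
  then have "mpol (\<not> p) X a" by simp
  with MNot.IH[of "\<not> p" W] show ?case by (cases p) auto
next
  case (MNext D a)
  then have "mpol p X a" by simp
  with MNext.IH[of p W] show ?case by (cases p) auto
next
  case (MMu Z a)
  show ?case
  proof (cases "Z = X")
    case False
    with MMu.prems have a: "mpol p X a" by simp
    have twist: "W(Z := K, X := M) = W(X := M, Z := K)" for K M
      using False by (rule fun_upd_twist)
    have "(p \<longrightarrow> mf_sem s tv (W(X := I, Z := K)) a \<subseteq> mf_sem s tv (W(X := J, Z := K)) a) \<and>
        (\<not> p \<longrightarrow> mf_sem s tv (W(X := J, Z := K)) a \<subseteq> mf_sem s tv (W(X := I, Z := K)) a)" for K
      using MMu.IH[OF a, of "W(Z := K)"] unfolding twist .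
    then show ?thesis unfolding mf_sem_MMu by (cases p) (simp_all add: lfp_mono)
  next
    case True
    then show ?thesis by (simp only: mf_sem_MMu fun_upd_upd) simp
  qed
qed simp

lemma mono_mf_sem: "mpol True X \<psi> \<Longrightarrow> mono (\<lambda>I. mf_sem s tv (W(X := I)) \<psi>)"
  by (rule monoI) (use mf_sem_mpol_mono[where p = True] in blast)

fun mf_positive :: "('ap, 'n) mf \<Rightarrow> bool" where
  "mf_positive (MTest d \<pi>) = True"
| "mf_positive (MVar X) = True"
| "mf_positive (MOr p q) = (mf_positive p \<and> mf_positive q)"
| "mf_positive (MNot p) = mf_positive p"
| "mf_positive (MNext D p) = mf_positive p"
| "mf_positive (MMu X p) = (mpol True X p \<and> mf_positive p)"

lemma mwf_imp_mf_positive: "mwf lok B \<psi> \<Longrightarrow> mf_positive \<psi>"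
  by (induction \<psi>) auto

lemma lfp_vimage:
  fixes f :: "'a set \<Rightarrow> 'a set" and g :: "'b set \<Rightarrow> 'b set"
  assumes "mono f" "mono g" "\<And>I. g (F -` I) = F -` f I"
  shows "lfp g = F -` lfp f"
proof
  show "lfp g \<subseteq> F -` lfp f"
    by (rule lfp_lowerbound) (simp add: assms(3) lfp_unfold[OF assms(1), symmetric])
  define X0 where "X0 = {x. F -` {x} \<subseteq> lfp g}"
  have "f X0 \<subseteq> X0"
  proof
    fix x assume "x \<in> f X0"
    then have "F -` {x} \<subseteq> g (F -` X0)" by (auto simp: assms(3))
    also have "g (F -` X0) \<subseteq> g (lfp g)" by (rule monoD[OF assms(2)]) (auto simp: X0_def)
    finally show "x \<in> X0" unfolding X0_def lfp_unfold[OF assms(2), symmetric] by simp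
  qed
  then have "lfp f \<subseteq> X0" by (rule lfp_lowerbound)
  then show "F -` lfp f \<subseteq> lfp g" unfolding X0_def by auto
qed

lemma mf_sem_vimage:
  assumes "mf_positive \<psi>" "\<And>D w. D \<in> mnexts \<psi> \<Longrightarrow> F (s' D w) = s D (F w)"
  shows "mf_sem s' (\<lambda>d \<pi>. F -` tv d \<pi>) (\<lambda>X. F -` W X) \<psi> = F -` mf_sem s tv W \<psi>"
  using assms
proof (induction \<psi> arbitrary: W)
  case (MMu X p)
  have env: "(\<lambda>Y. F -` W Y)(X := F -` I) = (\<lambda>Y. F -` (W(X := I)) Y)" for I
    by (simp add: fun_eq_iff)
  have "mf_sem s' (\<lambda>d \<pi>. F -` tv d \<pi>) ((\<lambda>Y. F -` W Y)(X := F -` I)) p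
      = F -` mf_sem s tv (W(X := I)) p" for I
    unfolding env by (rule MMu.IH) (use MMu.prems in auto)
  with MMu.prems show ?case
    unfolding mf_sem_MMu by (intro lfp_vimage mono_mf_sem) auto
qed auto

section \<open>Discrete time and the translation at the origin\<close>

abbreviation nsem :: "('ap tf \<Rightarrow> nat \<Rightarrow> nat set) \<Rightarrow> (nat \<Rightarrow> nat set) \<Rightarrow> ('ap, 'n) mf \<Rightarrow> nat set" where
  "nsem \<equiv> mf_sem (\<lambda>_. Suc)"

lemma lfp_Int_subset:
  assumes "mono g" "\<And>I J. I \<inter> K = J \<inter> K \<Longrightarrow> f I \<inter> K = g J \<inter> K"
  shows "lfp f \<inter> K \<subseteq> lfp g"
proof -
  have "f (lfp g \<union> - K) \<inter> K = g (lfp g) \<inter> K" by (rule assms(2)) blast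
  then have "f (lfp g \<union> - K) \<subseteq> lfp g \<union> - K" using lfp_unfold[OF assms(1)] by blast
  then have "lfp f \<subseteq> lfp g \<union> - K" by (rule lfp_lowerbound)
  then show ?thesis by blast
qed

lemma lfp_Int_eq:
  assumes "mono f" "mono g" "\<And>I J. I \<inter> K = J \<inter> K \<Longrightarrow> f I \<inter> K = g J \<inter> K"
  shows "lfp f \<inter> K = lfp g \<inter> K"
proof -
  have "lfp f \<inter> K \<subseteq> lfp g" by (rule lfp_Int_subset[OF assms(2,3)])
  moreover have "lfp g \<inter> K \<subseteq> lfp f"
    by (rule lfp_Int_subset[OF assms(1)]) (metis assms(3))
  ultimately show ?thesis by blast
qed

fun mtests :: "('ap, 'n) mf \<Rightarrow> ('ap tf \<times> nat) list" where
  "mtests (MTest d \<pi>) = [(d, \<pi>)]"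
| "mtests (MVar X) = []"
| "mtests (MOr p q) = mtests p @ mtests q"
| "mtests (MNot p) = mtests p"
| "mtests (MNext D p) = mtests p"
| "mtests (MMu X p) = mtests p"

lemma nsem_Int_atLeast_eq:
  assumes "mf_positive \<psi>"
    and "\<forall>(d, \<pi>)\<in>set (mtests \<psi>). tv d \<pi> \<inter> {k..} = tv' d \<pi> \<inter> {k..}"
    and "\<forall>X\<in>mfv \<psi>. W X \<inter> {k..} = W' X \<inter> {k..}"
  shows "nsem tv W \<psi> \<inter> {k..} = nsem tv' W' \<psi> \<inter> {k..}"
  using assms
proof (induction \<psi> arbitrary: W W')
  case (MOr p q)
  have "nsem tv W p \<inter> {k..} = nsem tv' W' p \<inter> {k..}"
    by (rule MOr.IH(1)) (use MOr.prems in simp_all)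
  moreover have "nsem tv W q \<inter> {k..} = nsem tv' W' q \<inter> {k..}"
    by (rule MOr.IH(2)) (use MOr.prems in simp_all)
  ultimately show ?case by (simp add: Int_Un_distrib2)
next
  case (MNot p)
  have "nsem tv W p \<inter> {k..} = nsem tv' W' p \<inter> {k..}"
    by (rule MNot.IH) (use MNot.prems in simp_all)
  then show ?case by simp blast
next
  case (MNext D p)
  have "nsem tv W p \<inter> {k..} = nsem tv' W' p \<inter> {k..}"
    by (rule MNext.IH) (use MNext.prems in simp_all)
  then show ?case by (simp add: set_eq_iff) (metis Suc_leD le_Suc_eq)
next
  case (MMu X p)
  have agree: "nsem tv (W(X := I)) p \<inter> {k..} = nsem tv' (W'(X := J)) p \<inter> {k..}"
    if "I \<inter> {k..} = J \<inter> {k..}" for I J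
    by (rule MMu.IH) (use MMu.prems that in auto)
  show ?case unfolding mf_sem_MMu
  proof (rule lfp_Int_eq)
    show "mono (\<lambda>I. nsem tv (W(X := I)) p)" "mono (\<lambda>J. nsem tv' (W'(X := J)) p)"
      using MMu.prems(1) by (simp_all add: mono_mf_sem)
  qed (rule agree)
qed auto

fun mf_map :: "(nat \<Rightarrow> 'ap tf \<Rightarrow> 'ap tf) \<Rightarrow> (nat \<Rightarrow> 'm) \<Rightarrow> ('ap, 'n) mf \<Rightarrow> ('ap, 'm) mf" where
  "mf_map \<tau> \<Gamma> (MTest d \<pi>) = MTest (\<tau> \<pi> d) \<pi>"
| "mf_map \<tau> \<Gamma> (MVar X) = MVar X"
| "mf_map \<tau> \<Gamma> (MOr p q) = MOr (mf_map \<tau> \<Gamma> p) (mf_map \<tau> \<Gamma> q)"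
| "mf_map \<tau> \<Gamma> (MNot p) = MNot (mf_map \<tau> \<Gamma> p)"
| "mf_map \<tau> \<Gamma> (MNext D p) = MNext \<Gamma> (mf_map \<tau> \<Gamma> p)"
| "mf_map \<tau> \<Gamma> (MMu X p) = MMu X (mf_map \<tau> \<Gamma> p)"

lemma nsem_mf_map: "nsem tv W (mf_map \<tau> \<Gamma> \<psi>) = nsem (\<lambda>d \<pi>. tv (\<tau> \<pi> d) \<pi>) W \<psi>"
  by (induction \<psi> arbitrary: W) auto

lemma mfv_mf_map [simp]: "mfv (mf_map \<tau> \<Gamma> \<psi>) = mfv \<psi>"
  by (induction \<psi>) auto

lemma mpol_mf_map [simp]: "mpol p X (mf_map \<tau> \<Gamma> \<psi>) = mpol p X \<psi>"
  by (induction \<psi> arbitrary: p) auto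

lemma mnexts_mf_map: "mnexts (mf_map \<tau> \<Gamma> \<psi>) \<subseteq> {\<Gamma>}"
  by (induction \<psi>) auto

lemma mwf_mf_map:
  "mwf lok B \<psi> \<Longrightarrow> \<forall>\<pi>\<in>B. lok' (\<Gamma> \<pi>) \<Longrightarrow> \<forall>(d, \<pi>)\<in>set (mtests \<psi>). tf_ok (\<tau> \<pi> d)
    \<Longrightarrow> mwf lok' B (mf_map \<tau> \<Gamma> \<psi>)"
  by (induction \<psi>) auto

lemma Ball_ran_fun_upd_None: "\<forall>\<phi>\<in>ran \<sigma>. P \<phi> \<Longrightarrow> \<forall>\<phi>\<in>ran (\<sigma>(X := None)). P \<phi>"
  by (auto simp: ran_def)

fun msubst :: "(nat \<rightharpoonup> ('ap, 'n) mf) \<Rightarrow> ('ap, 'n) mf \<Rightarrow> ('ap, 'n) mf" where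
  "msubst \<sigma> (MTest d \<pi>) = MTest d \<pi>"
| "msubst \<sigma> (MVar X) = (case \<sigma> X of Some \<phi> \<Rightarrow> \<phi> | None \<Rightarrow> MVar X)"
| "msubst \<sigma> (MOr p q) = MOr (msubst \<sigma> p) (msubst \<sigma> q)"
| "msubst \<sigma> (MNot p) = MNot (msubst \<sigma> p)"
| "msubst \<sigma> (MNext D p) = MNext D (msubst \<sigma> p)"
| "msubst \<sigma> (MMu X p) = MMu X (msubst (\<sigma>(X := None)) p)"

lemma mf_sem_msubst:
  assumes "\<forall>\<phi>\<in>ran \<sigma>. mfv \<phi> = {}"
  shows "mf_sem s tv W (msubst \<sigma> \<psi>) =
    mf_sem s tv (\<lambda>X. case \<sigma> X of Some \<phi> \<Rightarrow> mf_sem s tv W \<phi> | None \<Rightarrow> W X) \<psi>"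
  using assms
proof (induction \<psi> arbitrary: \<sigma> W)
  case (MVar X)
  then show ?case by (cases "\<sigma> X") auto
next
  case (MMu X p)
  have env: "(\<lambda>Y. case (\<sigma>(X := None)) Y of Some \<phi> \<Rightarrow> mf_sem s tv (W(X := I)) \<phi> | None \<Rightarrow> (W(X := I)) Y)
      = (\<lambda>Y. case \<sigma> Y of Some \<phi> \<Rightarrow> mf_sem s tv W \<phi> | None \<Rightarrow> W Y)(X := I)" for I
  proof
    fix Y
    show "(case (\<sigma>(X := None)) Y of Some \<phi> \<Rightarrow> mf_sem s tv (W(X := I)) \<phi> | None \<Rightarrow> (W(X := I)) Y)
      = ((\<lambda>Y. case \<sigma> Y of Some \<phi> \<Rightarrow> mf_sem s tv W \<phi> | None \<Rightarrow> W Y)(X := I)) Y"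
    proof (cases "Y = X")
      case False
      show ?thesis
      proof (cases "\<sigma> Y")
        case (Some \<phi>)
        then have "mfv \<phi> = {}" using MMu.prems by (auto simp: ran_def)
        then have "mf_sem s tv (W(X := I)) \<phi> = mf_sem s tv W \<phi>" by (rule mf_sem_closed)
        then show ?thesis using False Some by simp
      qed (use False in simp)
    qed simp
  qed
  have "mf_sem s tv (W(X := I)) (msubst (\<sigma>(X := None)) p) =
      mf_sem s tv ((\<lambda>Y. case \<sigma> Y of Some \<phi> \<Rightarrow> mf_sem s tv W \<phi> | None \<Rightarrow> W Y)(X := I)) p" for I
    unfolding env[symmetric] by (rule MMu.IH) (rule Ball_ran_fun_upd_None[OF MMu.prems])
  then show ?case by simp
qed simp_all

lemma mfv_msubst: "\<forall>\<phi>\<in>ran \<sigma>. mfv \<phi> = {} \<Longrightarrow> mfv (msubst \<sigma> \<psi>) = mfv \<psi> - dom \<sigma>"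
proof (induction \<psi> arbitrary: \<sigma>)
  case (MVar X)
  then show ?case by (cases "\<sigma> X") (auto simp: ran_def)
next
  case (MMu X p)
  have "mfv (msubst (\<sigma>(X := None)) p) = mfv p - dom (\<sigma>(X := None))"
    by (rule MMu.IH) (use MMu.prems in \<open>auto simp: ran_def\<close>)
  then show ?case by auto
qed auto

lemma mpol_closed: "X \<notin> mfv \<phi> \<Longrightarrow> mpol p X \<phi>"
  by (induction \<phi> arbitrary: p) auto

lemma mpol_msubst:
  "mpol p X \<psi> \<Longrightarrow> X \<notin> dom \<sigma> \<Longrightarrow> \<forall>\<phi>\<in>ran \<sigma>. mfv \<phi> = {} \<Longrightarrow> mpol p X (msubst \<sigma> \<psi>)"
proof (induction \<psi> arbitrary: p \<sigma>)
  case (MVar Y)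
  then show ?case by (cases "\<sigma> Y") (auto simp: ran_def intro: mpol_closed)
next
  case (MMu Z a)
  show ?case
  proof (cases "Z = X")
    case False
    have "mpol p X (msubst (\<sigma>(Z := None)) a)"
      by (rule MMu.IH) (use MMu.prems False in \<open>auto simp: ran_def\<close>)
    then show ?thesis by simp
  qed simp
qed auto

lemma mwf_msubst:
  "mwf lok B \<psi> \<Longrightarrow> \<forall>\<phi>\<in>ran \<sigma>. mwf lok B \<phi> \<and> mfv \<phi> = {} \<Longrightarrow> mwf lok B (msubst \<sigma> \<psi>)"
proof (induction \<psi> arbitrary: \<sigma>)
  case (MVar X)
  then show ?case by (cases "\<sigma> X") (auto simp: ran_def)
next
  case (MMu X p)
  have "mwf lok B (msubst (\<sigma>(X := None)) p)"
    by (rule MMu.IH) (use MMu.prems in \<open>auto simp: ran_def\<close>)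
  moreover have "mpol True X (msubst (\<sigma>(X := None)) p)"
    by (rule mpol_msubst) (use MMu.prems in \<open>auto simp: ran_def\<close>)
  ultimately show ?case by simp
qed auto

lemma mnexts_msubst:
  "mnexts \<psi> \<subseteq> S \<Longrightarrow> \<forall>\<phi>\<in>ran \<sigma>. mnexts \<phi> \<subseteq> S \<Longrightarrow> mnexts (msubst \<sigma> \<psi>) \<subseteq> S"
proof (induction \<psi> arbitrary: \<sigma>)
  case (MVar X)
  then show ?case by (cases "\<sigma> X") (auto simp: ran_def)
next
  case (MMu X p)
  have "mnexts (msubst (\<sigma>(X := None)) p) \<subseteq> S"
    by (rule MMu.IH) (use MMu.prems in \<open>auto simp: ran_def\<close>)
  then show ?case by simp
qed auto

definition MFalse :: "('ap, 'n) mf" where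
  "MFalse = MMu 0 (MVar 0)"

lemma mf_sem_MFalse [simp]: "mf_sem s tv W MFalse = {}"
  unfolding MFalse_def by auto

text \<open>Translation of a formula evaluated at time 0: tests keep their meaning until the first next
  operator and are replaced via \<open>\<tau>\<close> below it. The map \<open>\<sigma>\<close> sends each fixpoint variable bound
  so far to the closed translation of its fixpoint formula, which is what the variable means at
  times \<open>\<ge> 1\<close>; a variable reached again at time 0 adds nothing to a least fixpoint, hence
  \<open>MFalse\<close>.\<close>
fun transl_origin :: "(nat \<Rightarrow> 'ap tf \<Rightarrow> 'ap tf) \<Rightarrow> (nat \<Rightarrow> 'm) \<Rightarrow> (nat \<rightharpoonup> ('ap, 'm) mf)
    \<Rightarrow> ('ap, 'n) mf \<Rightarrow> ('ap, 'm) mf" where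
  "transl_origin \<tau> \<Gamma> \<sigma> (MTest d \<pi>) = MTest d \<pi>"
| "transl_origin \<tau> \<Gamma> \<sigma> (MVar X) = MFalse"
| "transl_origin \<tau> \<Gamma> \<sigma> (MOr p q) = MOr (transl_origin \<tau> \<Gamma> \<sigma> p) (transl_origin \<tau> \<Gamma> \<sigma> q)"
| "transl_origin \<tau> \<Gamma> \<sigma> (MNot p) = MNot (transl_origin \<tau> \<Gamma> \<sigma> p)"
| "transl_origin \<tau> \<Gamma> \<sigma> (MNext D p) = MNext \<Gamma> (msubst \<sigma> (mf_map \<tau> \<Gamma> p))"
| "transl_origin \<tau> \<Gamma> \<sigma> (MMu X p) =
     transl_origin \<tau> \<Gamma> (\<sigma>(X \<mapsto> msubst \<sigma> (mf_map \<tau> \<Gamma> (MMu X p)))) p"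

definition subst_matches :: "(nat \<rightharpoonup> ('ap, 'm) mf) \<Rightarrow> (nat \<Rightarrow> nat set) \<Rightarrow> (('ap, 'm) mf \<Rightarrow> nat set) \<Rightarrow> bool" where
  "subst_matches \<sigma> W S \<longleftrightarrow> (\<forall>X \<phi>. \<sigma> X = Some \<phi> \<longrightarrow> 0 \<notin> W X \<and> W X \<inter> {1..} = S \<phi> \<inter> {1..})"

lemma nsem_msubst_mf_map:
  assumes "mf_positive \<psi>"
    and "\<forall>(d, \<pi>)\<in>set (mtests \<psi>). tv' (\<tau> \<pi> d) \<pi> \<inter> {1..} = tv d \<pi> \<inter> {1..}"
    and "mfv \<psi> \<subseteq> dom \<sigma>" "\<forall>\<phi>\<in>ran \<sigma>. mfv \<phi> = {}" "subst_matches \<sigma> W (nsem tv' W')"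
  shows "nsem tv' W' (msubst \<sigma> (mf_map \<tau> \<Gamma> \<psi>)) \<inter> {1..} = nsem tv W \<psi> \<inter> {1..}"
proof -
  define W\<sigma> where "W\<sigma> X = (case \<sigma> X of Some \<phi> \<Rightarrow> nsem tv' W' \<phi> | None \<Rightarrow> W' X)" for X
  have "nsem tv' W' (msubst \<sigma> (mf_map \<tau> \<Gamma> \<psi>)) = nsem (\<lambda>d \<pi>. tv' (\<tau> \<pi> d) \<pi>) W\<sigma> \<psi>"
    unfolding W\<sigma>_def mf_sem_msubst[OF assms(4)] by (rule nsem_mf_map)
  moreover have "nsem (\<lambda>d \<pi>. tv' (\<tau> \<pi> d) \<pi>) W\<sigma> \<psi> \<inter> {1..} = nsem tv W \<psi> \<inter> {1..}"
  proof (rule nsem_Int_atLeast_eq[OF assms(1)])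
    show "\<forall>(d, \<pi>)\<in>set (mtests \<psi>). tv' (\<tau> \<pi> d) \<pi> \<inter> {1..} = tv d \<pi> \<inter> {1..}"
      by (rule assms(2))
    show "\<forall>X\<in>mfv \<psi>. W\<sigma> X \<inter> {1..} = W X \<inter> {1..}"
    proof
      fix X assume "X \<in> mfv \<psi>"
      then obtain \<phi> where "\<sigma> X = Some \<phi>" using assms(3) by auto
      then show "W\<sigma> X \<inter> {1..} = W X \<inter> {1..}"
        using assms(5) by (simp add: W\<sigma>_def subst_matches_def)
    qed
  qed
  ultimately show ?thesis by simp
qed

lemma lfp_mem_iff_Diff:
  assumes "mono f" "f (lfp f - {x}) - {x} = f (lfp f) - {x}"
  shows "x \<in> lfp f \<longleftrightarrow> x \<in> f (lfp f - {x})"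
proof
  assume "x \<in> f (lfp f - {x})"
  moreover have "f (lfp f - {x}) \<subseteq> f (lfp f)" by (rule monoD[OF assms(1)]) blast
  ultimately show "x \<in> lfp f" using lfp_unfold[OF assms(1)] by blast
next
  assume x: "x \<in> lfp f"
  show "x \<in> f (lfp f - {x})"
  proof (rule ccontr)
    assume "x \<notin> f (lfp f - {x})"
    then have "f (lfp f - {x}) \<subseteq> lfp f - {x}" using assms(2) lfp_unfold[OF assms(1)] by blast
    then have "lfp f \<subseteq> lfp f - {x}" by (rule lfp_lowerbound)
    with x show False by blast
  qed
qed

lemma transl_origin_correct:
  assumes "mf_positive \<psi>"
    and "\<forall>(d, \<pi>)\<in>set (mtests \<psi>).
      (0 \<in> tv' d \<pi> \<longleftrightarrow> 0 \<in> tv d \<pi>) \<and> tv' (\<tau> \<pi> d) \<pi> \<inter> {1..} = tv d \<pi> \<inter> {1..}"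
    and "mfv \<psi> \<subseteq> dom \<sigma>" "\<forall>\<phi>\<in>ran \<sigma>. mfv \<phi> = {}" "subst_matches \<sigma> W (nsem tv' W')"
  shows "0 \<in> nsem tv' W' (transl_origin \<tau> \<Gamma> \<sigma> \<psi>) \<longleftrightarrow> 0 \<in> nsem tv W \<psi>"
  using assms
proof (induction \<psi> arbitrary: \<sigma> W)
  case (MVar X)
  then show ?case by (auto simp: subst_matches_def)
next
  case (MNext D p)
  have "nsem tv' W' (msubst \<sigma> (mf_map \<tau> \<Gamma> p)) \<inter> {1..} = nsem tv W p \<inter> {1..}"
    by (rule nsem_msubst_mf_map) (use MNext.prems in auto)
  then show ?case by (simp add: set_eq_iff) (metis One_nat_def atLeast_iff le_refl)
next
  case (MMu X p)
  define c where "c = msubst \<sigma> (mf_map \<tau> \<Gamma> (MMu X p))"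
  define f where "f = (\<lambda>I. nsem tv (W(X := I)) p)"
  have mono: "mono f" unfolding f_def using MMu.prems(1) by (intro mono_mf_sem) simp
  have c_closed: "mfv c = {}"
    using MMu.prems(3) unfolding c_def mfv_msubst[OF MMu.prems(4)] by auto
  have c_lfp: "nsem tv' W' c \<inter> {1..} = lfp f \<inter> {1..}"
    unfolding c_def f_def mf_sem_MMu[symmetric] by (rule nsem_msubst_mf_map) (use MMu.prems in auto)
  have "0 \<in> nsem tv' W' (transl_origin \<tau> \<Gamma> (\<sigma>(X \<mapsto> c)) p) \<longleftrightarrow>
      0 \<in> nsem tv (W(X := lfp f - {0})) p"
  proof (rule MMu.IH)
    show "subst_matches (\<sigma>(X \<mapsto> c)) (W(X := lfp f - {0})) (nsem tv' W')"
      using MMu.prems(5) c_lfp by (auto simp: subst_matches_def)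
  qed (use MMu.prems c_closed in \<open>auto simp: ran_def\<close>)
  also have "\<dots> \<longleftrightarrow> 0 \<in> f (lfp f - {0})" by (simp add: f_def)
  also have "\<dots> \<longleftrightarrow> 0 \<in> lfp f"
  proof (rule lfp_mem_iff_Diff[OF mono, symmetric])
    have "f (lfp f - {0}) \<inter> {1..} = f (lfp f) \<inter> {1..}"
      unfolding f_def by (rule nsem_Int_atLeast_eq) (use MMu.prems(1) in auto)
    then show "f (lfp f - {0}) - {0} = f (lfp f) - {0}"
      by (auto simp: set_eq_iff Suc_le_eq)
  qed
  finally show ?case unfolding c_def f_def by (simp only: transl_origin.simps mf_sem_MMu)
qed auto

lemma mfv_transl_origin:
  "\<forall>\<phi>\<in>ran \<sigma>. mfv \<phi> = {} \<Longrightarrow> mfv \<psi> \<subseteq> dom \<sigma> \<Longrightarrow> mfv (transl_origin \<tau> \<Gamma> \<sigma> \<psi>) = {}"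
proof (induction \<psi> arbitrary: \<sigma>)
  case (MNext D p)
  then show ?case by (simp add: mfv_msubst)
next
  case (MMu X p)
  define c where "c = msubst \<sigma> (mf_map \<tau> \<Gamma> (MMu X p))"
  have "mfv c = {}"
    using MMu.prems(2) unfolding c_def mfv_msubst[OF MMu.prems(1)] by auto
  then have "mfv (transl_origin \<tau> \<Gamma> (\<sigma>(X \<mapsto> c)) p) = {}"
    by (intro MMu.IH) (use MMu.prems in \<open>auto simp: ran_def\<close>)
  then show ?case unfolding c_def by simp
qed (auto simp: MFalse_def)

lemma mwf_transl_origin:
  assumes "mwf lok B \<psi>" "\<forall>\<pi>\<in>B. lok' (\<Gamma> \<pi>)" "\<forall>(d, \<pi>)\<in>set (mtests \<psi>). tf_ok (\<tau> \<pi> d)"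
    and "\<forall>\<phi>\<in>ran \<sigma>. mwf lok' B \<phi> \<and> mfv \<phi> = {}" "mfv \<psi> \<subseteq> dom \<sigma>"
  shows "mwf lok' B (transl_origin \<tau> \<Gamma> \<sigma> \<psi>)"
  using assms
proof (induction \<psi> arbitrary: \<sigma>)
  case (MNext D p)
  have "mwf lok' B (msubst \<sigma> (mf_map \<tau> \<Gamma> p))"
    by (rule mwf_msubst[OF mwf_mf_map]) (use MNext.prems in auto)
  with MNext.prems(2) show ?case by simp
next
  case (MMu X p)
  define c where "c = msubst \<sigma> (mf_map \<tau> \<Gamma> (MMu X p))"
  have "mwf lok' B c"
    unfolding c_def by (rule mwf_msubst[OF mwf_mf_map[where \<tau> = \<tau> and \<Gamma> = \<Gamma>, OF MMu.prems(1-3)] MMu.prems(4)])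
  moreover have "mfv c = {}"
  proof -
    have "\<forall>\<phi>\<in>ran \<sigma>. mfv \<phi> = {}" using MMu.prems(4) by blast
    then have "mfv c = mfv (mf_map \<tau> \<Gamma> (MMu X p)) - dom \<sigma>" unfolding c_def by (rule mfv_msubst)
    with MMu.prems(5) show ?thesis by auto
  qed
  ultimately have "mwf lok' B (transl_origin \<tau> \<Gamma> (\<sigma>(X \<mapsto> c)) p)"
    by (intro MMu.IH) (use MMu.prems in \<open>auto simp: ran_def\<close>)
  then show ?case unfolding c_def by simp
qed (auto simp: MFalse_def)

lemma mnexts_transl_origin:
  "\<forall>\<phi>\<in>ran \<sigma>. mnexts \<phi> \<subseteq> {\<Gamma>} \<Longrightarrow> mnexts (transl_origin \<tau> \<Gamma> \<sigma> \<psi>) \<subseteq> {\<Gamma>}"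
proof (induction \<psi> arbitrary: \<sigma>)
  case (MNext D p)
  then show ?case using mnexts_msubst[OF mnexts_mf_map MNext.prems] by simp
next
  case (MMu X p)
  define c where "c = msubst \<sigma> (mf_map \<tau> \<Gamma> (MMu X p))"
  have "mnexts c \<subseteq> {\<Gamma>}" unfolding c_def by (rule mnexts_msubst[OF mnexts_mf_map MMu.prems])
  then have "mnexts (transl_origin \<tau> \<Gamma> (\<sigma>(X \<mapsto> c)) p) \<subseteq> {\<Gamma>}"
    by (intro MMu.IH) (use MMu.prems in \<open>auto simp: ran_def\<close>)
  then show ?case unfolding c_def by simp
qed (auto simp: MFalse_def)

section \<open>Derived trace operators\<close>

definition TFalse :: "'ap tf" where
  "TFalse = TMu 0 (TVar 0)"

definition TTrue :: "'ap tf" where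
  "TTrue = TNot TFalse"

definition TAnd :: "'ap tf \<Rightarrow> 'ap tf \<Rightarrow> 'ap tf" where
  "TAnd a b = TNot (TOr (TNot a) (TNot b))"

definition TIff :: "'ap tf \<Rightarrow> 'ap tf \<Rightarrow> 'ap tf" where
  "TIff a b = TOr (TAnd a b) (TAnd (TNot a) (TNot b))"

definition TAtFirst :: "'ap tf \<Rightarrow> 'ap tf \<Rightarrow> 'ap tf" where
  "TAtFirst a b = TMu 0 (TOr (TAnd a b) (TAnd (TNot a) (TNext SG (TVar 0))))"

lemma tsem_cong: "(\<forall>Y\<in>tfv d. V Y = V' Y) \<Longrightarrow> tsem tr V d = tsem tr V' d"
proof (induction d arbitrary: V V')
  case (TOr a b)
  have "tsem tr V a = tsem tr V' a" by (rule TOr.IH(1)) (use TOr.prems in simp)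
  moreover have "tsem tr V b = tsem tr V' b" by (rule TOr.IH(2)) (use TOr.prems in simp)
  ultimately show ?case by simp
next
  case (TNot a)
  have "tsem tr V a = tsem tr V' a" by (rule TNot.IH) (use TNot.prems in simp)
  then show ?case by simp
next
  case (TNext f a)
  have "tsem tr V a = tsem tr V' a" by (rule TNext.IH) (use TNext.prems in simp)
  then show ?case by simp
next
  case (TMu Y a)
  have "tsem tr (V(Y:=I)) a = tsem tr (V'(Y:=I)) a" for I
    by (rule TMu.IH) (use TMu.prems in simp)
  then show ?case by simp
qed auto

lemma tsem_closed: "tfv d = {} \<Longrightarrow> tsem tr V d = tsem tr V' d"
  by (rule tsem_cong) simp

lemma tpol_closed: "Y \<notin> tfv d \<Longrightarrow> tpol p Y d"
  by (induction d arbitrary: p) auto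

lemma tfv_simps[simp]:
  "tfv (TFalse :: 'ap tf) = {}" "tfv (TTrue :: 'ap tf) = {}"
  "tfv (TAnd a b) = tfv a \<union> tfv b" "tfv (TIff a b) = tfv a \<union> tfv b"
  "tfv (TAtFirst a b) = (tfv a \<union> tfv b) - {0}"
  by (auto simp: TFalse_def TTrue_def TAnd_def TIff_def TAtFirst_def)

lemma twf_simps[simp]:
  "twf (TFalse :: 'ap tf)" "twf (TTrue :: 'ap tf)"
  "twf (TAnd a b) = (twf a \<and> twf b)" "twf (TIff a b) = (twf a \<and> twf b)"
  by (auto simp: TFalse_def TTrue_def TAnd_def TIff_def)

lemma twf_TAtFirst: "twf a \<Longrightarrow> twf b \<Longrightarrow> 0 \<notin> tfv a \<Longrightarrow> 0 \<notin> tfv b \<Longrightarrow> twf (TAtFirst a b)"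
  by (auto simp: TAtFirst_def TAnd_def tpol_closed)

lemma tpol_TAtFirst: "Y \<noteq> 0 \<Longrightarrow> Y \<notin> tfv a \<Longrightarrow> tpol p Y b \<Longrightarrow> tpol p Y (TAtFirst a b)"
  by (auto simp: TAtFirst_def TAnd_def tpol_closed)

lemma tpol_TAnd: "tpol p Y (TAnd a b) = (tpol p Y a \<and> tpol p Y b)"
  by (simp add: TAnd_def)

lemma tsem_TFalse[simp]: "tsem tr V TFalse = {}"
  by (auto simp: TFalse_def)

lemma tsem_TTrue[simp]: "tsem tr V TTrue = UNIV"
  by (simp add: TTrue_def)

lemma tsem_TAnd[simp]: "tsem tr V (TAnd a b) = tsem tr V a \<inter> tsem tr V b"
  by (auto simp: TAnd_def)

lemma tsem_TIff[simp]: "tsem tr V (TIff a b) = {k. k \<in> tsem tr V a \<longleftrightarrow> k \<in> tsem tr V b}"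
  by (auto simp: TIff_def)

lemma tsem_TNext_SG[simp]: "tsem tr V (TNext SG a) = {i. Suc i \<in> tsem tr V a}"
  by auto

lemma at_first_prefixpoint_mem:
  assumes "(A \<inter> B) \<union> (- A \<inter> {i. Suc i \<in> I}) \<subseteq> I" "j \<in> A" "j \<in> B" "\<forall>l. k \<le> l \<and> l < j \<longrightarrow> l \<notin> A" "k \<le> j"
  shows "k \<in> I"
  using assms
proof (induction "j - k" arbitrary: k)
  case 0
  then have "k = j" by simp
  then show ?case using 0 by blast
next
  case (Suc n)
  then have "k < j" by simp
  then have "k \<notin> A" using Suc.prems(4) by simp
  have "Suc k \<in> I" by (rule Suc.hyps) (use Suc in auto)
  then show ?case using \<open>k \<notin> A\<close> Suc.prems(1) by blast
qed

lemma at_first_least_prefixpoint: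
  "\<Inter>{I. (A \<inter> B) \<union> (- A \<inter> {i. Suc i \<in> I}) \<subseteq> I} =
    {k. \<exists>j\<ge>k. j \<in> A \<and> j \<in> B \<and> (\<forall>l. k \<le> l \<and> l < j \<longrightarrow> l \<notin> A)}"
  (is "\<Inter>{I. ?f I \<subseteq> I} = ?S")
proof
  have "?f ?S \<subseteq> ?S"
  proof
    fix k assume k: "k \<in> ?f ?S"
    show "k \<in> ?S"
    proof (cases "k \<in> A")
      case True
      then show ?thesis using k by auto
    next
      case False
      then have "Suc k \<in> ?S" using k by auto
      then obtain j where j: "j \<ge> Suc k" "j \<in> A" "j \<in> B" "\<forall>l. Suc k \<le> l \<and> l < j \<longrightarrow> l \<notin> A" by auto
      have "\<forall>l. k \<le> l \<and> l < j \<longrightarrow> l \<notin> A"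
      proof (intro allI impI)
        fix l assume "k \<le> l \<and> l < j"
        then show "l \<notin> A" using j(4) False by (cases "l = k") auto
      qed
      moreover have "j \<ge> k" using j(1) by simp
      ultimately show ?thesis using j(2,3) by blast
    qed
  qed
  then show "\<Inter>{I. ?f I \<subseteq> I} \<subseteq> ?S" by blast
next
  show "?S \<subseteq> \<Inter>{I. ?f I \<subseteq> I}"
  proof
    fix k assume "k \<in> ?S"
    then obtain j where j: "j \<ge> k" "j \<in> A" "j \<in> B" "\<forall>l. k \<le> l \<and> l < j \<longrightarrow> l \<notin> A" by auto
    show "k \<in> \<Inter>{I. ?f I \<subseteq> I}"
    proof
      fix I assume "I \<in> {I. ?f I \<subseteq> I}"
      then show "k \<in> I" using at_first_prefixpoint_mem[of A B I j k] j by auto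
    qed
  qed
qed

lemma tsem_TAtFirst:
  assumes "0 \<notin> tfv a" "0 \<notin> tfv b"
  shows "tsem tr V (TAtFirst a b) = {k. \<exists>j\<ge>k. j \<in> tsem tr V a \<and> j \<in> tsem tr V b \<and>
            (\<forall>l. k \<le> l \<and> l < j \<longrightarrow> l \<notin> tsem tr V a)}"
proof -
  have a: "tsem tr (V(0:=I)) a = tsem tr V a" for I by (rule tsem_cong) (use assms in auto)
  have b: "tsem tr (V(0:=I)) b = tsem tr V b" for I by (rule tsem_cong) (use assms in auto)
  have "tsem tr V (TAtFirst a b) = \<Inter>{I. (tsem tr V a \<inter> tsem tr V b) \<union> (- tsem tr V a \<inter> {i. Suc i \<in> I}) \<subseteq> I}"
    unfolding TAtFirst_def by (simp add: a b)
  then show ?thesis by (simp only: at_first_least_prefixpoint)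
qed

text \<open>The positions a \<open>\<delta>\<close>-mumbling step can land on: \<open>\<delta>\<close> holds there, or \<open>\<delta>\<close> never holds
  afterwards (and mumbling falls back to single steps).\<close>
definition TStop :: "'ap tf \<Rightarrow> 'ap tf" where
  "TStop \<delta> = TOr \<delta> (TNot (TNext SG (TAtFirst \<delta> TTrue)))"

definition TAtNextStop :: "'ap tf \<Rightarrow> 'ap tf \<Rightarrow> 'ap tf" where
  "TAtNextStop \<delta> \<phi> = TNext SG (TAtFirst (TStop \<delta>) \<phi>)"

definition TUnchanged :: "'ap tf \<Rightarrow> 'ap tf list \<Rightarrow> 'ap tf" where
  "TUnchanged \<delta> ts = foldr (\<lambda>\<theta> acc. TAnd (TIff \<theta> (TAtNextStop \<delta> \<theta>)) acc) ts TTrue"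

definition TEvenRun :: "'ap tf \<Rightarrow> 'ap tf list \<Rightarrow> 'ap tf" where
  "TEvenRun \<delta> ts = TMu 1 (TOr (TNot (TUnchanged \<delta> ts))
     (TAnd (TUnchanged \<delta> ts) (TAtNextStop \<delta> (TAnd (TUnchanged \<delta> ts) (TAtNextStop \<delta> (TVar 1))))))"

definition stutter_basis :: "'ap tf \<Rightarrow> 'ap tf list \<Rightarrow> 'ap tf list" where
  "stutter_basis \<delta> ts = TAtNextStop \<delta> (TEvenRun \<delta> ts) # map (TAtNextStop \<delta>) ts"

definition stops :: "'ap trace \<Rightarrow> 'ap tf \<Rightarrow> nat set" where
  "stops tr \<delta> = tsem tr (\<lambda>_. {}) (TStop \<delta>)"

definition next_stop :: "'ap trace \<Rightarrow> 'ap tf \<Rightarrow> nat \<Rightarrow> nat" where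
  "next_stop tr \<delta> k = (LEAST j. k < j \<and> j \<in> stops tr \<delta>)"

lemma tfv_TStop[simp]: "tfv (TStop \<delta>) = tfv \<delta>"
  by (auto simp: TStop_def)

lemma tfv_TAtNextStop[simp]: "tfv (TAtNextStop \<delta> \<phi>) = (tfv \<delta> \<union> tfv \<phi>) - {0}"
  by (auto simp: TAtNextStop_def)

lemma tfv_TUnchanged[simp]: "\<forall>\<theta>\<in>set ts. tfv \<theta> = {} \<Longrightarrow> tfv \<delta> = {} \<Longrightarrow> tfv (TUnchanged \<delta> ts) = {}"
  unfolding TUnchanged_def by (induction ts) auto

lemma tfv_TEvenRun[simp]: "\<forall>\<theta>\<in>set ts. tfv \<theta> = {} \<Longrightarrow> tfv \<delta> = {} \<Longrightarrow> tfv (TEvenRun \<delta> ts) = {}"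
  unfolding TEvenRun_def by auto

lemma twf_TStop: "twf \<delta> \<Longrightarrow> tfv \<delta> = {} \<Longrightarrow> twf (TStop \<delta>)"
  unfolding TStop_def by (auto intro: twf_TAtFirst)

lemma twf_TAtNextStop: "twf \<delta> \<Longrightarrow> tfv \<delta> = {} \<Longrightarrow> twf \<phi> \<Longrightarrow> 0 \<notin> tfv \<phi> \<Longrightarrow> twf (TAtNextStop \<delta> \<phi>)"
  unfolding TAtNextStop_def by (auto intro!: twf_TAtFirst twf_TStop)

lemma twf_TUnchanged: "\<forall>\<theta>\<in>set ts. tf_ok \<theta> \<Longrightarrow> tf_ok \<delta> \<Longrightarrow> twf (TUnchanged \<delta> ts)"
  unfolding TUnchanged_def tf_ok_def by (induction ts) (auto intro!: twf_TAtNextStop)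

lemma tpol_TAtNextStop: "Y \<noteq> 0 \<Longrightarrow> tfv \<delta> = {} \<Longrightarrow> tpol p Y \<phi> \<Longrightarrow> tpol p Y (TAtNextStop \<delta> \<phi>)"
  unfolding TAtNextStop_def by (auto intro!: tpol_TAtFirst)

lemma tf_ok_TEvenRun: "\<forall>\<theta>\<in>set ts. tf_ok \<theta> \<Longrightarrow> tf_ok \<delta> \<Longrightarrow> tf_ok (TEvenRun \<delta> ts)"
proof -
  assume a: "\<forall>\<theta>\<in>set ts. tf_ok \<theta>" "tf_ok \<delta>"
  then have c: "\<forall>\<theta>\<in>set ts. tfv \<theta> = {}" "tfv \<delta> = {}" "twf \<delta>" unfolding tf_ok_def by auto
  have s: "twf (TUnchanged \<delta> ts)" "tfv (TUnchanged \<delta> ts) = {}" using twf_TUnchanged[OF a] c by auto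
  have p: "tpol q Y (TUnchanged \<delta> ts)" for q Y by (rule tpol_closed) (simp add: s)
  have tw: "twf (TAnd (TUnchanged \<delta> ts) (TAtNextStop \<delta> (TVar 1)))"
    using s c by (auto intro!: twf_TAtNextStop)
  have tp: "tpol True 1 (TAnd (TUnchanged \<delta> ts) (TAtNextStop \<delta> (TVar 1)))"
    using c by (auto simp: tpol_TAnd p intro!: tpol_TAtNextStop)
  have "twf (TEvenRun \<delta> ts)" unfolding TEvenRun_def
    using s c tw tp by (auto simp: tpol_TAnd p intro!: twf_TAtNextStop tpol_TAtNextStop)
  then show ?thesis unfolding tf_ok_def using c by simp
qed

lemma tf_ok_TAtNextStop: "tf_ok \<delta> \<Longrightarrow> tf_ok \<phi> \<Longrightarrow> tf_ok (TAtNextStop \<delta> \<phi>)"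
  unfolding tf_ok_def by (auto intro!: twf_TAtNextStop)

lemma tf_ok_TAtFirst_TStop: "tf_ok \<delta> \<Longrightarrow> tf_ok \<phi> \<Longrightarrow> tf_ok (TAtFirst (TStop \<delta>) \<phi>)"
  unfolding tf_ok_def by (auto intro!: twf_TAtFirst twf_TStop)

lemma tf_ok_stutter_basis: "\<forall>\<theta>\<in>set ts. tf_ok \<theta> \<Longrightarrow> tf_ok \<delta> \<Longrightarrow> \<forall>d\<in>set (stutter_basis \<delta> ts). tf_ok d"
  unfolding stutter_basis_def by (auto intro!: tf_ok_TAtNextStop tf_ok_TEvenRun)

lemma ex_least_ge_iff: "(\<exists>j\<ge>k. j \<in> A \<and> (\<forall>l. k \<le> l \<and> l < j \<longrightarrow> l \<notin> A)) \<longleftrightarrow> (\<exists>j\<ge>k. j \<in> (A::nat set))"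
proof
  assume "\<exists>j\<ge>k. j \<in> A"
  then have ex: "\<exists>j. k \<le> j \<and> j \<in> A" by auto
  define j0 where "j0 = (LEAST j. k \<le> j \<and> j \<in> A)"
  have "k \<le> j0 \<and> j0 \<in> A" unfolding j0_def by (rule LeastI_ex[OF ex])
  moreover have "\<forall>l. k \<le> l \<and> l < j0 \<longrightarrow> l \<notin> A" unfolding j0_def using not_less_Least by blast
  ultimately show "\<exists>j\<ge>k. j \<in> A \<and> (\<forall>l. k \<le> l \<and> l < j \<longrightarrow> l \<notin> A)" by blast
qed blast

lemma tsem_TStop:
  assumes "tfv \<delta> = {}"
  shows "tsem tr V (TStop \<delta>) = {k. k \<in> tsem tr V \<delta> \<or> \<not> (\<exists>j>k. j \<in> tsem tr V \<delta>)}"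
proof -
  have "tsem tr V (TAtFirst \<delta> TTrue) = {k. \<exists>j\<ge>k. j \<in> tsem tr V \<delta>}"
    using assms by (simp add: tsem_TAtFirst ex_least_ge_iff)
  then show ?thesis unfolding TStop_def by (auto simp: Suc_le_eq)
qed

lemma stops_eq: "tfv \<delta> = {} \<Longrightarrow> stops tr \<delta> = {k. k \<in> tsem tr (\<lambda>_. {}) \<delta> \<or> \<not> (\<exists>j>k. j \<in> tsem tr (\<lambda>_. {}) \<delta>)}"
  unfolding stops_def by (rule tsem_TStop)

lemma stops_unbounded: "tfv \<delta> = {} \<Longrightarrow> \<exists>j>k. j \<in> stops tr \<delta>"
proof -
  assume c: "tfv \<delta> = {}"
  show ?thesis
  proof (cases "\<exists>j>k. j \<in> tsem tr (\<lambda>_. {}) \<delta>")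
    case True
    then show ?thesis using stops_eq[OF c] by auto
  next
    case False
    then have "Suc k \<in> stops tr \<delta>" using stops_eq[OF c] by auto
    then show ?thesis by auto
  qed
qed

lemma next_stop_gt_in_stops:
  assumes "tfv \<delta> = {}"
  shows "k < next_stop tr \<delta> k" and "next_stop tr \<delta> k \<in> stops tr \<delta>"
proof -
  have "\<exists>j. k < j \<and> j \<in> stops tr \<delta>" using stops_unbounded[OF assms] by auto
  then have "k < next_stop tr \<delta> k \<and> next_stop tr \<delta> k \<in> stops tr \<delta>"
    unfolding next_stop_def by (rule LeastI_ex)
  then show "k < next_stop tr \<delta> k" and "next_stop tr \<delta> k \<in> stops tr \<delta>" by auto
qed

lemma not_in_stops_before_next_stop: "k < l \<Longrightarrow> l < next_stop tr \<delta> k \<Longrightarrow> l \<notin> stops tr \<delta>"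
  unfolding next_stop_def using not_less_Least by blast

lemma next_stop_le: "k < j \<Longrightarrow> j \<in> stops tr \<delta> \<Longrightarrow> next_stop tr \<delta> k \<le> j"
  unfolding next_stop_def by (rule Least_le) simp

lemma next_stop_eq:
  assumes "tfv \<delta> = {}" "x < y" "y < next_stop tr \<delta> x"
  shows "next_stop tr \<delta> y = next_stop tr \<delta> x"
proof (rule antisym)
  show "next_stop tr \<delta> y \<le> next_stop tr \<delta> x" using next_stop_gt_in_stops[OF assms(1)] not_in_stops_before_next_stop next_stop_le assms(3) by blast
  show "next_stop tr \<delta> x \<le> next_stop tr \<delta> y"
  proof (rule ccontr)
    assume "\<not> next_stop tr \<delta> x \<le> next_stop tr \<delta> y"
    then have "next_stop tr \<delta> y < next_stop tr \<delta> x" by simp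
    moreover have "x < next_stop tr \<delta> y" using next_stop_gt_in_stops(1)[OF assms(1), where k=y and tr=tr] assms(2) by (meson less_trans)
    ultimately show False using next_stop_gt_in_stops[OF assms(1)] not_in_stops_before_next_stop next_stop_le by blast
  qed
qed

lemma succ_mumble_eq_next_stop:
  assumes "tfv \<delta> = {}"
  shows "succ_mumble tr \<delta> k = next_stop tr \<delta> k"
proof (cases "\<exists>j>k. j \<in> tsem tr (\<lambda>_. {}) \<delta>")
  case True
  define j0 where "j0 = (LEAST j. k < j \<and> j \<in> tsem tr (\<lambda>_. {}) \<delta>)"
  have ex: "\<exists>j. k < j \<and> j \<in> tsem tr (\<lambda>_. {}) \<delta>" using True by auto
  have j0: "k < j0" "j0 \<in> tsem tr (\<lambda>_. {}) \<delta>" unfolding j0_def using LeastI_ex[OF ex] by auto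
  have j0m: "y \<notin> tsem tr (\<lambda>_. {}) \<delta>" if "k < y" "y < j0" for y
    using not_less_Least[of y "\<lambda>j. k < j \<and> j \<in> tsem tr (\<lambda>_. {}) \<delta>"] that unfolding j0_def by blast
  have "next_stop tr \<delta> k = j0" unfolding next_stop_def
  proof (rule Least_equality)
    show "k < j0 \<and> j0 \<in> stops tr \<delta>" using j0 stops_eq[OF assms] by auto
    fix y assume y: "k < y \<and> y \<in> stops tr \<delta>"
    show "j0 \<le> y"
    proof (rule ccontr)
      assume "\<not> j0 \<le> y"
      then have "y < j0" by simp
      then have "y \<notin> tsem tr (\<lambda>_. {}) \<delta>" using j0m y by auto
      moreover have "\<exists>j>y. j \<in> tsem tr (\<lambda>_. {}) \<delta>" using j0 \<open>y < j0\<close> by auto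
      ultimately show False using y stops_eq[OF assms] by auto
    qed
  qed
  then show ?thesis unfolding succ_mumble_def j0_def using True by simp
next
  case False
  have "next_stop tr \<delta> k = Suc k" unfolding next_stop_def
  proof (rule Least_equality)
    show "k < Suc k \<and> Suc k \<in> stops tr \<delta>" using False stops_eq[OF assms] by auto
  qed simp
  moreover have "succ_mumble tr \<delta> k = Suc k" unfolding succ_mumble_def by (rule if_not_P[OF False])
  ultimately show ?thesis by simp
qed

lemma tsem_TAtNextStop:
  assumes "tfv \<delta> = {}" "0 \<notin> tfv \<phi>"
  shows "tsem tr V (TAtNextStop \<delta> \<phi>) = {k. next_stop tr \<delta> k \<in> tsem tr V \<phi>}"
proof -
  have D: "tsem tr V (TStop \<delta>) = stops tr \<delta>" unfolding stops_def by (rule tsem_closed) (simp add: assms)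
  have "Suc k \<in> tsem tr V (TAtFirst (TStop \<delta>) \<phi>) \<longleftrightarrow> next_stop tr \<delta> k \<in> tsem tr V \<phi>" for k
  proof -
    have "Suc k \<in> tsem tr V (TAtFirst (TStop \<delta>) \<phi>) \<longleftrightarrow>
      (\<exists>j\<ge>Suc k. j \<in> stops tr \<delta> \<and> j \<in> tsem tr V \<phi> \<and> (\<forall>l. Suc k \<le> l \<and> l < j \<longrightarrow> l \<notin> stops tr \<delta>))"
      using assms by (simp add: tsem_TAtFirst D)
    also have "\<dots> \<longleftrightarrow> next_stop tr \<delta> k \<in> tsem tr V \<phi>"
    proof
      assume "\<exists>j\<ge>Suc k. j \<in> stops tr \<delta> \<and> j \<in> tsem tr V \<phi> \<and> (\<forall>l. Suc k \<le> l \<and> l < j \<longrightarrow> l \<notin> stops tr \<delta>)"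
      then obtain j where j: "j \<ge> Suc k" "j \<in> stops tr \<delta>" "j \<in> tsem tr V \<phi>" "\<forall>l. Suc k \<le> l \<and> l < j \<longrightarrow> l \<notin> stops tr \<delta>"
        by blast
      have "next_stop tr \<delta> k \<le> j" using j by (intro next_stop_le) auto
      moreover have "\<not> next_stop tr \<delta> k < j" using j(4) next_stop_gt_in_stops[OF assms(1), where k=k and tr=tr] by (auto simp: Suc_le_eq)
      ultimately have "next_stop tr \<delta> k = j" by simp
      then show "next_stop tr \<delta> k \<in> tsem tr V \<phi>" using j by simp
    next
      assume "next_stop tr \<delta> k \<in> tsem tr V \<phi>"
      moreover have "\<forall>l. Suc k \<le> l \<and> l < next_stop tr \<delta> k \<longrightarrow> l \<notin> stops tr \<delta>"
        using not_in_stops_before_next_stop by (auto simp: Suc_le_eq)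
      ultimately show "\<exists>j\<ge>Suc k. j \<in> stops tr \<delta> \<and> j \<in> tsem tr V \<phi> \<and> (\<forall>l. Suc k \<le> l \<and> l < j \<longrightarrow> l \<notin> stops tr \<delta>)"
        using next_stop_gt_in_stops[OF assms(1), where k=k and tr=tr] by (auto simp: Suc_le_eq)
    qed
    finally show ?thesis .
  qed
  then show ?thesis unfolding TAtNextStop_def by simp
qed

lemma tsem_TAtFirst_TStop:
  assumes "tfv \<delta> = {}" "tfv \<theta> = {}"
  shows "k \<in> tsem tr V (TAtFirst (TStop \<delta>) \<theta>) \<longleftrightarrow>
    (\<exists>j\<ge>k. j \<in> stops tr \<delta> \<and> j \<in> tsem tr (\<lambda>_. {}) \<theta> \<and> (\<forall>l. k \<le> l \<and> l < j \<longrightarrow> l \<notin> stops tr \<delta>))"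
proof -
  have D: "tsem tr V (TStop \<delta>) = stops tr \<delta>" unfolding stops_def by (rule tsem_closed) (simp add: assms)
  have T: "tsem tr V \<theta> = tsem tr (\<lambda>_. {}) \<theta>" by (rule tsem_closed) (simp add: assms)
  show ?thesis using assms by (simp add: tsem_TAtFirst D T)
qed

lemma tsem_TUnchanged:
  assumes "tfv \<delta> = {}" "\<forall>\<theta>\<in>set ts. tfv \<theta> = {}"
  shows "tsem tr V (TUnchanged \<delta> ts) = {k. \<forall>\<theta>\<in>set ts. (k \<in> tsem tr (\<lambda>_. {}) \<theta> \<longleftrightarrow> next_stop tr \<delta> k \<in> tsem tr (\<lambda>_. {}) \<theta>)}"
  using assms(2)
proof (induction ts)
  case Nil
  then show ?case by (simp add: TUnchanged_def)
next
  case (Cons \<theta> ts)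
  have T: "tsem tr V \<theta> = tsem tr (\<lambda>_. {}) \<theta>" by (rule tsem_closed) (use Cons.prems in simp)
  have "tsem tr V (TUnchanged \<delta> (\<theta> # ts)) = tsem tr V (TIff \<theta> (TAtNextStop \<delta> \<theta>)) \<inter> tsem tr V (TUnchanged \<delta> ts)"
    by (simp add: TUnchanged_def)
  also have "tsem tr V (TIff \<theta> (TAtNextStop \<delta> \<theta>)) = {k. k \<in> tsem tr (\<lambda>_. {}) \<theta> \<longleftrightarrow> next_stop tr \<delta> k \<in> tsem tr (\<lambda>_. {}) \<theta>}"
    using Cons.prems assms(1) by (simp add: tsem_TAtNextStop T)
  finally show ?case using Cons by auto
qed

definition even_run_step :: "nat set \<Rightarrow> (nat \<Rightarrow> nat) \<Rightarrow> nat set \<Rightarrow> nat set" where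
  "even_run_step S nx I = - S \<union> (S \<inter> {k. nx k \<in> S \<and> nx (nx k) \<in> I})"

lemma mono_even_run_step: "mono (even_run_step S nx)"
  unfolding even_run_step_def by (rule monoI) auto

lemma tsem_TEvenRun:
  assumes "tfv \<delta> = {}" "\<forall>\<theta>\<in>set ts. tfv \<theta> = {}"
  shows "tsem tr V (TEvenRun \<delta> ts) = lfp (even_run_step (tsem tr (\<lambda>_. {}) (TUnchanged \<delta> ts)) (next_stop tr \<delta>))"
proof -
  define S where "S = tsem tr (\<lambda>_. {}) (TUnchanged \<delta> ts)"
  have fv: "tfv (TUnchanged \<delta> ts) = {}" using assms by simp
  have b: "tsem tr (V(1:=I)) (TOr (TNot (TUnchanged \<delta> ts)) (TAnd (TUnchanged \<delta> ts) (TAtNextStop \<delta> (TAnd (TUnchanged \<delta> ts) (TAtNextStop \<delta> (TVar 1))))))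
     = even_run_step S (next_stop tr \<delta>) I" for I
  proof -
    have S1: "tsem tr (V(1:=I)) (TUnchanged \<delta> ts) = S" unfolding S_def by (rule tsem_closed[OF fv])
    have i1: "tsem tr (V(1:=I)) (TAtNextStop \<delta> (TVar 1)) = {k. next_stop tr \<delta> k \<in> I}"
      using assms(1) by (simp add: tsem_TAtNextStop)
    have i2: "tsem tr (V(1:=I)) (TAtNextStop \<delta> (TAnd (TUnchanged \<delta> ts) (TAtNextStop \<delta> (TVar 1)))) =
        {k. next_stop tr \<delta> k \<in> S \<and> next_stop tr \<delta> (next_stop tr \<delta> k) \<in> I}"
    proof -
      have "0 \<notin> tfv (TAnd (TUnchanged \<delta> ts) (TAtNextStop \<delta> (TVar 1)))" using fv by simp
      then have "tsem tr (V(1:=I)) (TAtNextStop \<delta> (TAnd (TUnchanged \<delta> ts) (TAtNextStop \<delta> (TVar 1)))) =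
        {k. next_stop tr \<delta> k \<in> tsem tr (V(1:=I)) (TAnd (TUnchanged \<delta> ts) (TAtNextStop \<delta> (TVar 1)))}"
        by (rule tsem_TAtNextStop[OF assms(1)])
      also have "\<dots> = {k. next_stop tr \<delta> k \<in> S \<and> next_stop tr \<delta> (next_stop tr \<delta> k) \<in> I}"
        by (simp only: tsem_TAnd S1 i1) simp
      finally show ?thesis .
    qed
    show ?thesis unfolding even_run_step_def by (simp only: tsem.simps S1 i2 tsem_TAnd)
  qed
  have "tsem tr V (TEvenRun \<delta> ts) = \<Inter>{I. even_run_step S (next_stop tr \<delta>) I \<subseteq> I}"
    unfolding TEvenRun_def by (simp only: tsem.simps(6) b)
  then show ?thesis unfolding S_def lfp_def Inf_set_def by simp
qed

section \<open>Stuttering positions follow mumbling positions\<close>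

lemma mem_TAtFirst_TStop_iff:
  assumes "tfv \<delta> = {}" "tfv \<theta> = {}"
    and "k \<le> y" "y \<in> stops tr \<delta>" "\<forall>l. k \<le> l \<and> l < y \<longrightarrow> l \<notin> stops tr \<delta>"
  shows "k \<in> tsem tr V (TAtFirst (TStop \<delta>) \<theta>) \<longleftrightarrow> y \<in> tsem tr (\<lambda>_. {}) \<theta>"
proof -
  have "k \<in> tsem tr V (TAtFirst (TStop \<delta>) \<theta>) \<longleftrightarrow>
    (\<exists>j\<ge>k. j \<in> stops tr \<delta> \<and> j \<in> tsem tr (\<lambda>_. {}) \<theta> \<and> (\<forall>l. k \<le> l \<and> l < j \<longrightarrow> l \<notin> stops tr \<delta>))"
    by (rule tsem_TAtFirst_TStop[OF assms(1,2)])
  also have "\<dots> \<longleftrightarrow> y \<in> tsem tr (\<lambda>_. {}) \<theta>"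
  proof
    assume "\<exists>j\<ge>k. j \<in> stops tr \<delta> \<and> j \<in> tsem tr (\<lambda>_. {}) \<theta> \<and> (\<forall>l. k \<le> l \<and> l < j \<longrightarrow> l \<notin> stops tr \<delta>)"
    then obtain j where j: "j \<ge> k" "j \<in> stops tr \<delta>" "j \<in> tsem tr (\<lambda>_. {}) \<theta>"
      "\<forall>l. k \<le> l \<and> l < j \<longrightarrow> l \<notin> stops tr \<delta>"
      by blast
    have "\<not> j < y" using j(1,2) assms(5) by auto
    moreover have "\<not> y < j" using j(4) assms(3,4) by auto
    ultimately show "y \<in> tsem tr (\<lambda>_. {}) \<theta>" using j(3) by simp
  next
    assume "y \<in> tsem tr (\<lambda>_. {}) \<theta>"
    then show "\<exists>j\<ge>k. j \<in> stops tr \<delta> \<and> j \<in> tsem tr (\<lambda>_. {}) \<theta> \<and> (\<forall>l. k \<le> l \<and> l < j \<longrightarrow> l \<notin> stops tr \<delta>)"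
      using assms(3-5) by blast
  qed
  finally show ?thesis .
qed

lemma succ_stutter_gt: "i < succ_stutter tr \<gamma> i"
proof (cases "\<exists>j>i. \<exists>d\<in>set \<gamma>. (i \<in> tsem tr (\<lambda>_. {}) d) \<noteq> (j \<in> tsem tr (\<lambda>_. {}) d)")
  case True
  then have "\<exists>j. i < j \<and> (\<exists>d\<in>set \<gamma>. (i \<in> tsem tr (\<lambda>_. {}) d) \<noteq> (j \<in> tsem tr (\<lambda>_. {}) d))" by auto
  from LeastI_ex[OF this] show ?thesis unfolding succ_stutter_def using True by simp
next
  case False
  then have "succ_stutter tr \<gamma> i = Suc i" unfolding succ_stutter_def by (rule if_not_P)
  then show ?thesis by simp
qed

definition mumble_pos :: "'ap trace \<Rightarrow> 'ap tf \<Rightarrow> nat \<Rightarrow> nat" where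
  "mumble_pos tr \<delta> n = (succ_mumble tr \<delta> ^^ n) 0"

definition stutter_pos :: "'ap trace \<Rightarrow> 'ap tf list \<Rightarrow> nat \<Rightarrow> nat" where
  "stutter_pos tr \<gamma> n = (succ_stutter tr \<gamma> ^^ n) 0"

locale mumble_stutter =
  fixes tr :: "'ap trace" and \<delta> :: "'ap tf" and ts :: "'ap tf list"
  assumes tf_ok_delta: "tf_ok \<delta>" and tf_ok_tests: "\<forall>\<theta>\<in>set ts. tf_ok \<theta>"
begin

abbreviation mpos :: "nat \<Rightarrow> nat" where
  "mpos \<equiv> mumble_pos tr \<delta>"

abbreviation spos :: "nat \<Rightarrow> nat" where
  "spos \<equiv> stutter_pos tr (stutter_basis \<delta> ts)"

abbreviation unchanged :: "nat set" where
  "unchanged \<equiv> tsem tr (\<lambda>_. {}) (TUnchanged \<delta> ts)"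

abbreviation even_run :: "nat set" where
  "even_run \<equiv> tsem tr (\<lambda>_. {}) (TEvenRun \<delta> ts)"

lemma closed: "tfv \<delta> = {}" "\<forall>\<theta>\<in>set ts. tfv \<theta> = {}"
  using tf_ok_delta tf_ok_tests unfolding tf_ok_def by auto

lemma mpos_0 [simp]: "mpos 0 = 0"
  by (simp add: mumble_pos_def)

lemma mpos_Suc: "mpos (Suc n) = next_stop tr \<delta> (mpos n)"
  by (simp add: mumble_pos_def succ_mumble_eq_next_stop[OF closed(1)])

lemma spos_0 [simp]: "spos 0 = 0"
  by (simp add: stutter_pos_def)

lemma spos_Suc: "spos (Suc n) = succ_stutter tr (stutter_basis \<delta> ts) (spos n)"
  by (simp add: stutter_pos_def)

lemma mpos_less_Suc: "mpos n < mpos (Suc n)"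
  unfolding mpos_Suc by (rule next_stop_gt_in_stops(1)[OF closed(1)])

lemma le_mpos: "i \<le> mpos i"
proof (induction i)
  case (Suc i)
  then show ?case using mpos_less_Suc[of i] by simp
qed simp

lemma mpos_Suc_in_stops: "mpos (Suc n) \<in> stops tr \<delta>"
  unfolding mpos_Suc by (rule next_stop_gt_in_stops(2)[OF closed(1)])

lemma mem_unchanged_iff:
  "x \<in> unchanged \<longleftrightarrow>
    (\<forall>\<theta>\<in>set ts. x \<in> tsem tr (\<lambda>_. {}) \<theta> \<longleftrightarrow> next_stop tr \<delta> x \<in> tsem tr (\<lambda>_. {}) \<theta>)"
  using tsem_TUnchanged[OF closed] by blast

lemma mem_even_run_iff:
  "x \<in> even_run \<longleftrightarrow>
    x \<notin> unchanged \<or> next_stop tr \<delta> x \<in> unchanged \<and> next_stop tr \<delta> (next_stop tr \<delta> x) \<in> even_run"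
proof -
  have "even_run = lfp (even_run_step unchanged (next_stop tr \<delta>))"
    by (rule tsem_TEvenRun[OF closed])
  then have "even_run = even_run_step unchanged (next_stop tr \<delta>) even_run"
    using lfp_unfold[OF mono_even_run_step] by simp
  then show ?thesis unfolding even_run_step_def by blast
qed

lemma stutter_basis_cong:
  assumes "d \<in> set (stutter_basis \<delta> ts)" "next_stop tr \<delta> x = next_stop tr \<delta> y"
  shows "x \<in> tsem tr (\<lambda>_. {}) d \<longleftrightarrow> y \<in> tsem tr (\<lambda>_. {}) d"
proof -
  obtain e where "tfv e = {}" "d = TAtNextStop \<delta> e"
    using assms(1) closed tfv_TEvenRun[OF closed(2,1)] unfolding stutter_basis_def
    by (auto simp del: tfv_TEvenRun)
  with assms(2) show ?thesis by (simp add: tsem_TAtNextStop[OF closed(1)])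
qed

lemma stutter_basis_agree:
  assumes "\<forall>d\<in>set (stutter_basis \<delta> ts).
    x \<in> tsem tr (\<lambda>_. {}) d \<longleftrightarrow> next_stop tr \<delta> x \<in> tsem tr (\<lambda>_. {}) d"
  shows "next_stop tr \<delta> x \<in> unchanged"
    and "next_stop tr \<delta> x \<in> even_run \<longleftrightarrow> next_stop tr \<delta> (next_stop tr \<delta> x) \<in> even_run"
proof -
  have at_next: "x \<in> tsem tr (\<lambda>_. {}) (TAtNextStop \<delta> e) \<longleftrightarrow> next_stop tr \<delta> x \<in> tsem tr (\<lambda>_. {}) e"
    if "tfv e = {}" for x e
    using that by (simp add: tsem_TAtNextStop[OF closed(1)])
  show "next_stop tr \<delta> x \<in> unchanged"
    unfolding mem_unchanged_iff
  proof
    fix \<theta> assume "\<theta> \<in> set ts"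
    with assms closed show "next_stop tr \<delta> x \<in> tsem tr (\<lambda>_. {}) \<theta> \<longleftrightarrow>
        next_stop tr \<delta> (next_stop tr \<delta> x) \<in> tsem tr (\<lambda>_. {}) \<theta>"
      by (simp add: stutter_basis_def at_next)
  qed
  show "next_stop tr \<delta> x \<in> even_run \<longleftrightarrow> next_stop tr \<delta> (next_stop tr \<delta> x) \<in> even_run"
    using assms closed by (simp add: stutter_basis_def at_next)
qed

lemma succ_stutter_eq_next_stop:
  assumes "\<exists>d\<in>set (stutter_basis \<delta> ts).
    (x \<in> tsem tr (\<lambda>_. {}) d) \<noteq> (next_stop tr \<delta> x \<in> tsem tr (\<lambda>_. {}) d)"
  shows "succ_stutter tr (stutter_basis \<delta> ts) x = next_stop tr \<delta> x"
proof -
  have gt: "x < next_stop tr \<delta> x" by (rule next_stop_gt_in_stops(1)[OF closed(1)])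
  have "(LEAST j. x < j \<and> (\<exists>d\<in>set (stutter_basis \<delta> ts).
      (x \<in> tsem tr (\<lambda>_. {}) d) \<noteq> (j \<in> tsem tr (\<lambda>_. {}) d))) = next_stop tr \<delta> x"
  proof (rule Least_equality)
    fix y
    assume y: "x < y \<and> (\<exists>d\<in>set (stutter_basis \<delta> ts). (x \<in> tsem tr (\<lambda>_. {}) d) \<noteq> (y \<in> tsem tr (\<lambda>_. {}) d))"
    show "next_stop tr \<delta> x \<le> y"
    proof (rule ccontr)
      assume "\<not> next_stop tr \<delta> x \<le> y"
      then have "next_stop tr \<delta> y = next_stop tr \<delta> x" using next_stop_eq[OF closed(1)] y by simp
      then show False using y stutter_basis_cong by blast
    qed
  qed (use gt assms in blast)
  with gt assms show ?thesis unfolding succ_stutter_def by auto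
qed

lemma mem_even_run_iff_even:
  assumes "\<forall>k. n \<le> k \<and> k < e \<longrightarrow> mpos k \<in> unchanged" "mpos e \<notin> unchanged" "n \<le> e"
  shows "mpos n \<in> even_run \<longleftrightarrow> even (e - n)"
  using assms
proof (induction "e - n" arbitrary: n rule: less_induct)
  case less
  consider "e = n" | "e = Suc n" | "Suc (Suc n) \<le> e" using less.prems(3) by linarith
  then show ?case
  proof cases
    case 1
    then show ?thesis using less.prems mem_even_run_iff[of "mpos e"] by simp
  next
    case 2
    then show ?thesis using less.prems mem_even_run_iff[of "mpos n"] by (simp add: mpos_Suc)
  next
    case 3
    have "mpos n \<in> unchanged" "mpos (Suc n) \<in> unchanged" using less.prems(1) 3 by auto
    then have "mpos n \<in> even_run \<longleftrightarrow> mpos (Suc (Suc n)) \<in> even_run"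
      using mem_even_run_iff[of "mpos n"] by (simp add: mpos_Suc)
    also have "\<dots> \<longleftrightarrow> even (e - Suc (Suc n))"
      by (rule less.hyps) (use less.prems 3 in auto)
    also have "\<dots> \<longleftrightarrow> even (e - n)" using 3 by (simp add: Suc_diff_Suc)
    finally show ?thesis .
  qed
qed

lemma tests_const_from:
  assumes "\<forall>k\<ge>a. mpos k \<in> unchanged" "a \<le> j" "\<theta> \<in> set ts"
  shows "mpos j \<in> tsem tr (\<lambda>_. {}) \<theta> \<longleftrightarrow> mpos a \<in> tsem tr (\<lambda>_. {}) \<theta>"
  using assms(2)
proof (induction j rule: dec_induct)
  case (step j)
  then have "mpos j \<in> unchanged" using assms(1) by simp
  with step.IH assms(3) show ?case by (simp add: mem_unchanged_iff mpos_Suc)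
qed simp

text \<open>The parity of the remaining run of unchanged stops differs between consecutive stops of the
  run, so if \<open>TEvenRun\<close> holds equally at two consecutive stops the run never ends.\<close>
lemma unchanged_forever:
  assumes "mpos (Suc n) \<in> unchanged" "mpos (Suc n) \<in> even_run \<longleftrightarrow> mpos (Suc (Suc n)) \<in> even_run"
  shows "\<forall>k\<ge>Suc n. mpos k \<in> unchanged"
proof (rule ccontr)
  assume "\<not> (\<forall>k\<ge>Suc n. mpos k \<in> unchanged)"
  then have ex: "\<exists>k. Suc n \<le> k \<and> mpos k \<notin> unchanged" by auto
  define e where "e = (LEAST k. Suc n \<le> k \<and> mpos k \<notin> unchanged)"
  have e: "Suc n \<le> e" "mpos e \<notin> unchanged" unfolding e_def using LeastI_ex[OF ex] by auto
  have before: "\<forall>k. Suc n \<le> k \<and> k < e \<longrightarrow> mpos k \<in> unchanged"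
    unfolding e_def using not_less_Least by blast
  have e2: "Suc (Suc n) \<le> e" using e assms(1) by (cases "e = Suc n") auto
  have "mpos (Suc n) \<in> even_run \<longleftrightarrow> even (e - Suc n)"
    by (rule mem_even_run_iff_even) (use before e in auto)
  moreover have "mpos (Suc (Suc n)) \<in> even_run \<longleftrightarrow> even (e - Suc (Suc n))"
    by (rule mem_even_run_iff_even) (use before e e2 in auto)
  moreover have "even (e - Suc n) \<longleftrightarrow> \<not> even (e - Suc (Suc n))"
  proof -
    have "e - Suc n = Suc (e - Suc (Suc n))" using e2 by simp
    then show ?thesis by simp
  qed
  ultimately show False using assms(2) by blast
qed

lemma spos_tracks_mpos:
  "spos n = mpos n \<or> (\<exists>p<n. (\<forall>k\<ge>Suc p. mpos k \<in> unchanged) \<and> mpos p < spos n)"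
proof (induction n)
  case (Suc n)
  from Suc.IH show ?case
  proof
    assume eq: "spos n = mpos n"
    show ?thesis
    proof (cases "\<exists>d\<in>set (stutter_basis \<delta> ts).
        (mpos n \<in> tsem tr (\<lambda>_. {}) d) \<noteq> (next_stop tr \<delta> (mpos n) \<in> tsem tr (\<lambda>_. {}) d)")
      case True
      then have "spos (Suc n) = mpos (Suc n)"
        unfolding spos_Suc eq mpos_Suc by (rule succ_stutter_eq_next_stop)
      then show ?thesis by simp
    next
      case False
      then have "mpos (Suc n) \<in> unchanged"
        and "mpos (Suc n) \<in> even_run \<longleftrightarrow> mpos (Suc (Suc n)) \<in> even_run"
        using stutter_basis_agree[of "mpos n"] by (auto simp: mpos_Suc)
      then have "\<forall>k\<ge>Suc n. mpos k \<in> unchanged" by (rule unchanged_forever)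
      moreover have "mpos n < spos (Suc n)" unfolding spos_Suc eq[symmetric] by (rule succ_stutter_gt)
      ultimately show ?thesis by blast
    qed
  next
    assume "\<exists>p<n. (\<forall>k\<ge>Suc p. mpos k \<in> unchanged) \<and> mpos p < spos n"
    then obtain p where p: "p < n" "\<forall>k\<ge>Suc p. mpos k \<in> unchanged" "mpos p < spos n" by blast
    have "spos n < spos (Suc n)" unfolding spos_Suc by (rule succ_stutter_gt)
    with p(3) have "mpos p < spos (Suc n)" by linarith
    with p(1,2) show ?thesis using less_SucI by blast
  qed
qed simp

lemma first_stop_from_is_mpos:
  assumes "mpos p < k"
  shows "\<exists>q\<ge>p. k \<le> mpos (Suc q) \<and> (\<forall>l. k \<le> l \<and> l < mpos (Suc q) \<longrightarrow> l \<notin> stops tr \<delta>)"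
proof -
  define A where "A = {i. mpos i < k}"
  have "finite A" unfolding A_def
    by (rule finite_subset[of _ "{..<k}"]) (use le_mpos le_less_trans in auto)
  moreover have "p \<in> A" unfolding A_def using assms by simp
  ultimately have q: "Max A \<in> A" "p \<le> Max A" "Suc (Max A) \<notin> A"
    using Max_ge Max_in not_less_eq_eq by blast+
  then have "k \<le> mpos (Suc (Max A))" "mpos (Max A) < k" unfolding A_def by auto
  moreover have "\<forall>l. k \<le> l \<and> l < mpos (Suc (Max A)) \<longrightarrow> l \<notin> stops tr \<delta>"
  proof (intro allI impI)
    fix l assume "k \<le> l \<and> l < mpos (Suc (Max A))"
    with \<open>mpos (Max A) < k\<close> show "l \<notin> stops tr \<delta>"
      by (intro not_in_stops_before_next_stop) (auto simp: mpos_Suc)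
  qed
  ultimately show ?thesis using q(2) by blast
qed

lemma spos_TAtFirst_iff_mpos:
  assumes "\<theta> \<in> set ts" "0 < n"
  shows "spos n \<in> tsem tr (\<lambda>_. {}) (TAtFirst (TStop \<delta>) \<theta>) \<longleftrightarrow> mpos n \<in> tsem tr (\<lambda>_. {}) \<theta>"
proof -
  have closed_\<theta>: "tfv \<theta> = {}" using closed(2) assms(1) by blast
  obtain n' where n': "n = Suc n'" using assms(2) gr0_implies_Suc by blast
  from spos_tracks_mpos[of n] show ?thesis
  proof
    assume eq: "spos n = mpos n"
    have "mpos n \<in> stops tr \<delta>" unfolding n' by (rule mpos_Suc_in_stops)
    then show ?thesis unfolding eq by (intro mem_TAtFirst_TStop_iff[OF closed(1) closed_\<theta>]) auto
  next
    assume "\<exists>p<n. (\<forall>k\<ge>Suc p. mpos k \<in> unchanged) \<and> mpos p < spos n"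
    then obtain p where p: "p < n" "\<forall>k\<ge>Suc p. mpos k \<in> unchanged" "mpos p < spos n" by blast
    obtain q where q: "p \<le> q" "spos n \<le> mpos (Suc q)"
      "\<forall>l. spos n \<le> l \<and> l < mpos (Suc q) \<longrightarrow> l \<notin> stops tr \<delta>"
      using first_stop_from_is_mpos[OF p(3)] by blast
    have "spos n \<in> tsem tr (\<lambda>_. {}) (TAtFirst (TStop \<delta>) \<theta>) \<longleftrightarrow> mpos (Suc q) \<in> tsem tr (\<lambda>_. {}) \<theta>"
      by (rule mem_TAtFirst_TStop_iff[OF closed(1) closed_\<theta> q(2) mpos_Suc_in_stops q(3)])
    also have "\<dots> \<longleftrightarrow> mpos (Suc p) \<in> tsem tr (\<lambda>_. {}) \<theta>"
      by (rule tests_const_from[OF p(2) _ assms(1)]) (use q(1) in simp)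
    also have "\<dots> \<longleftrightarrow> mpos n \<in> tsem tr (\<lambda>_. {}) \<theta>"
      by (rule tests_const_from[OF p(2) _ assms(1), symmetric]) (use p(1) in simp)
    finally show ?thesis .
  qed
qed

end

section \<open>The translation\<close>

definition run :: "('ap trace \<Rightarrow> 'n \<Rightarrow> nat \<Rightarrow> nat) \<Rightarrow> 'ap tassign \<Rightarrow> (nat \<Rightarrow> 'n) \<Rightarrow> nat \<Rightarrow> nat \<Rightarrow> nat" where
  "run sN \<Pi> D n \<pi> = (case \<Pi> \<pi> of Some tr \<Rightarrow> (sN tr (D \<pi>) ^^ n) 0 | None \<Rightarrow> 0)"

lemma run_0: "run sN \<Pi> D 0 = (\<lambda>_. 0)"
  by (auto simp: run_def fun_eq_iff split: option.split)

lemma run_Suc: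
  assumes "\<forall>\<pi>\<in>dom \<Pi>. D' \<pi> = D \<pi>"
  shows "run sN \<Pi> D (Suc n) = succ_vec sN \<Pi> D' (run sN \<Pi> D n)"
proof
  fix \<pi>
  show "run sN \<Pi> D (Suc n) \<pi> = succ_vec sN \<Pi> D' (run sN \<Pi> D n) \<pi>"
  proof (cases "\<Pi> \<pi>")
    case (Some tr)
    moreover have "D' \<pi> = D \<pi>" using assms domI[of \<Pi>, OF Some] by blast
    ultimately show ?thesis by (simp add: run_def succ_vec_def)
  qed (simp add: run_def succ_vec_def)
qed

lemma vimage_run_mtest_sem:
  "run sN \<Pi> D -` mtest_sem \<Pi> d \<pi> =
    (case \<Pi> \<pi> of Some tr \<Rightarrow> {n. (sN tr (D \<pi>) ^^ n) 0 \<in> tsem tr (\<lambda>_. {}) d} | None \<Rightarrow> {})"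
  by (auto simp: run_def mtest_sem_def split: option.split)

lemma msem_iff_nsem_run:
  assumes "mf_positive \<psi>" "\<forall>D'\<in>mnexts \<psi>. \<forall>\<pi>\<in>dom \<Pi>. D' \<pi> = D \<pi>"
  shows "(\<lambda>_. 0) \<in> msem sN \<Pi> (\<lambda>_. {}) \<psi> \<longleftrightarrow>
    0 \<in> nsem (\<lambda>d \<pi>. run sN \<Pi> D -` mtest_sem \<Pi> d \<pi>) (\<lambda>_. {}) \<psi>"
proof -
  have "nsem (\<lambda>d \<pi>. run sN \<Pi> D -` mtest_sem \<Pi> d \<pi>) (\<lambda>X. run sN \<Pi> D -` {}) \<psi> =
      run sN \<Pi> D -` mf_sem (succ_vec sN \<Pi>) (mtest_sem \<Pi>) (\<lambda>_. {}) \<psi>"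
  proof (rule mf_sem_vimage[OF assms(1)])
    fix D' w assume "D' \<in> mnexts \<psi>"
    with assms(2) show "run sN \<Pi> D (Suc w) = succ_vec sN \<Pi> D' (run sN \<Pi> D w)"
      by (intro run_Suc) blast
  qed
  then have "0 \<in> nsem (\<lambda>d \<pi>. run sN \<Pi> D -` mtest_sem \<Pi> d \<pi>) (\<lambda>_. {}) \<psi> \<longleftrightarrow>
      run sN \<Pi> D 0 \<in> mf_sem (succ_vec sN \<Pi>) (mtest_sem \<Pi>) (\<lambda>_. {}) \<psi>"
    by simp
  then show ?thesis unfolding msem_eq_mf_sem run_0 by simp
qed

definition mtests_of :: "('ap, 'n) mf \<Rightarrow> nat \<Rightarrow> 'ap tf list" where
  "mtests_of \<psi> \<pi> = map fst (filter (\<lambda>x. snd x = \<pi>) (mtests \<psi>))"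

definition next_map :: "('ap, 'ap tf) mf \<Rightarrow> nat \<Rightarrow> 'ap tf" where
  "next_map \<psi> = (if mnexts \<psi> = {} then (\<lambda>_. TTrue) else (SOME D. D \<in> mnexts \<psi>))"

definition stutter_map :: "('ap, 'ap tf) mf \<Rightarrow> nat \<Rightarrow> 'ap tf list" where
  "stutter_map \<psi> \<pi> = stutter_basis (next_map \<psi> \<pi>) (mtests_of \<psi> \<pi>)"

definition stutter_test :: "('ap, 'ap tf) mf \<Rightarrow> nat \<Rightarrow> 'ap tf \<Rightarrow> 'ap tf" where
  "stutter_test \<psi> \<pi> d = TAtFirst (TStop (next_map \<psi> \<pi>)) d"

definition stutter_transl :: "('ap, 'ap tf) mf \<Rightarrow> ('ap, 'ap tf list) mf" where
  "stutter_transl \<psi> = transl_origin (stutter_test \<psi>) (stutter_map \<psi>) Map.empty \<psi>"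

lemma mwf_mnexts: "mwf lok H \<psi> \<Longrightarrow> D \<in> mnexts \<psi> \<Longrightarrow> \<pi> \<in> H \<Longrightarrow> lok (D \<pi>)"
  by (induction \<psi>) auto

lemma mwf_mtests: "mwf lok H \<psi> \<Longrightarrow> (d, \<pi>) \<in> set (mtests \<psi>) \<Longrightarrow> \<pi> \<in> H \<and> tf_ok d"
  by (induction \<psi>) auto

lemma tf_ok_mtests_of: "mwf lok H \<psi> \<Longrightarrow> \<forall>\<theta>\<in>set (mtests_of \<psi> \<pi>). tf_ok \<theta>"
  unfolding mtests_of_def using mwf_mtests by fastforce

lemma next_map_in_mnexts: "mnexts \<psi> \<noteq> {} \<Longrightarrow> next_map \<psi> \<in> mnexts \<psi>"
  unfolding next_map_def by (simp add: some_in_eq)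

lemma tf_ok_next_map:
  assumes "mwf tf_ok H \<psi>" "\<pi> \<in> H"
  shows "tf_ok (next_map \<psi> \<pi>)"
proof (cases "mnexts \<psi> = {}")
  case True
  then show ?thesis by (simp add: next_map_def tf_ok_def)
next
  case False
  then show ?thesis by (rule mwf_mnexts[OF assms(1) next_map_in_mnexts assms(2)])
qed

lemma mnexts_eq_next_map:
  assumes "\<forall>D1\<in>mnexts \<psi>. \<forall>D2\<in>mnexts \<psi>. \<forall>\<pi>\<in>H. D1 \<pi> = D2 \<pi>"
  shows "\<forall>D\<in>mnexts \<psi>. \<forall>\<pi>\<in>H. D \<pi> = next_map \<psi> \<pi>"
proof (cases "mnexts \<psi> = {}")
  case False
  with assms show ?thesis using next_map_in_mnexts by blast
qed simp

lemma mfv_stutter_transl: "mfv \<psi> = {} \<Longrightarrow> mfv (stutter_transl \<psi>) = {}"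
  unfolding stutter_transl_def by (rule mfv_transl_origin) simp_all

lemma mwf_stutter_transl:
  assumes "mwf tf_ok H \<psi>" "mfv \<psi> = {}"
  shows "mwf (\<lambda>\<gamma>. \<forall>d\<in>set \<gamma>. tf_ok d) H (stutter_transl \<psi>)"
  unfolding stutter_transl_def
proof (rule mwf_transl_origin[OF assms(1)])
  show "\<forall>\<pi>\<in>H. \<forall>d\<in>set (stutter_map \<psi> \<pi>). tf_ok d"
    unfolding stutter_map_def
    using tf_ok_stutter_basis[OF tf_ok_mtests_of[OF assms(1)] tf_ok_next_map[OF assms(1)]] by blast
  show "\<forall>(d, \<pi>)\<in>set (mtests \<psi>). tf_ok (stutter_test \<psi> \<pi> d)"
    unfolding stutter_test_def using mwf_mtests[OF assms(1)] tf_ok_next_map[OF assms(1)]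
    by (fastforce intro: tf_ok_TAtFirst_TStop)
qed (use assms(2) in simp_all)

lemma mnexts_stutter_transl: "mnexts (stutter_transl \<psi>) \<subseteq> {stutter_map \<psi>}"
  unfolding stutter_transl_def by (rule mnexts_transl_origin) simp

lemma stutter_tests_agree:
  assumes "mwf tf_ok H \<psi>" "dom \<Pi> \<subseteq> H" "(d, \<pi>) \<in> set (mtests \<psi>)"
  shows "run succ_stutter \<Pi> (stutter_map \<psi>) -` mtest_sem \<Pi> (stutter_test \<psi> \<pi> d) \<pi> \<inter> {1..} =
    run succ_mumble \<Pi> (next_map \<psi>) -` mtest_sem \<Pi> d \<pi> \<inter> {1..}"
proof (cases "\<Pi> \<pi>")
  case (Some tr)
  then have "\<pi> \<in> H" using assms(2) by auto
  interpret mumble_stutter tr "next_map \<psi> \<pi>" "mtests_of \<psi> \<pi>"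
    using tf_ok_next_map[OF assms(1) \<open>\<pi> \<in> H\<close>] tf_ok_mtests_of[OF assms(1)]
    by unfold_locales
  have "d \<in> set (mtests_of \<psi> \<pi>)" using assms(3) unfolding mtests_of_def by force
  then show ?thesis
    using Some spos_TAtFirst_iff_mpos
    by (auto simp: vimage_run_mtest_sem stutter_test_def stutter_map_def mumble_pos_def stutter_pos_def)
qed (simp add: vimage_run_mtest_sem)

lemma msem_stutter_transl_iff:
  assumes "mwf tf_ok H \<psi>" "mfv \<psi> = {}" "\<forall>D\<in>mnexts \<psi>. \<forall>\<pi>\<in>H. D \<pi> = next_map \<psi> \<pi>"
    and "dom \<Pi> \<subseteq> H"
  shows "(\<lambda>_. 0) \<in> msem succ_mumble \<Pi> (\<lambda>_. {}) \<psi> \<longleftrightarrow>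
    (\<lambda>_. 0) \<in> msem succ_stutter \<Pi> (\<lambda>_. {}) (stutter_transl \<psi>)"
proof -
  let ?tvM = "\<lambda>d \<pi>. run succ_mumble \<Pi> (next_map \<psi>) -` mtest_sem \<Pi> d \<pi>"
  let ?tvS = "\<lambda>d \<pi>. run succ_stutter \<Pi> (stutter_map \<psi>) -` mtest_sem \<Pi> d \<pi>"
  have "(\<lambda>_. 0) \<in> msem succ_mumble \<Pi> (\<lambda>_. {}) \<psi> \<longleftrightarrow> 0 \<in> nsem ?tvM (\<lambda>_. {}) \<psi>"
    by (rule msem_iff_nsem_run) (use assms mwf_imp_mf_positive in blast)+
  also have "\<dots> \<longleftrightarrow> 0 \<in> nsem ?tvS (\<lambda>_. {}) (stutter_transl \<psi>)"
    unfolding stutter_transl_def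
  proof (rule transl_origin_correct[symmetric])
    show "\<forall>(d, \<pi>)\<in>set (mtests \<psi>). (0 \<in> ?tvS d \<pi> \<longleftrightarrow> 0 \<in> ?tvM d \<pi>) \<and>
        ?tvS (stutter_test \<psi> \<pi> d) \<pi> \<inter> {1..} = ?tvM d \<pi> \<inter> {1..}"
    proof (intro ballI case_prodI2)
      fix x d \<pi> assume "x \<in> set (mtests \<psi>)" "x = (d, \<pi>)"
      then have "(d, \<pi>) \<in> set (mtests \<psi>)" by simp
      from stutter_tests_agree[OF assms(1,4) this]
      show "(0 \<in> ?tvS d \<pi> \<longleftrightarrow> 0 \<in> ?tvM d \<pi>) \<and>
          ?tvS (stutter_test \<psi> \<pi> d) \<pi> \<inter> {1..} = ?tvM d \<pi> \<inter> {1..}"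
        by (simp add: run_0)
    qed
  qed (use assms mwf_imp_mf_positive in \<open>simp_all add: subst_matches_def\<close>)
  also have "\<dots> \<longleftrightarrow> (\<lambda>_. 0) \<in> msem succ_stutter \<Pi> (\<lambda>_. {}) (stutter_transl \<psi>)"
    using mnexts_stutter_transl mwf_imp_mf_positive[OF mwf_stutter_transl[OF assms(1,2)]]
    by (intro msem_iff_nsem_run[symmetric]) auto
  finally show ?thesis .
qed

fun hf_with_body :: "('ap, 'n) hf \<Rightarrow> ('ap, 'm) mf \<Rightarrow> ('ap, 'm) hf" where
  "hf_with_body (HEx \<pi> p) b = HEx \<pi> (hf_with_body p b)"
| "hf_with_body (HAll \<pi> p) b = HAll \<pi> (hf_with_body p b)"
| "hf_with_body (HBody p) b = HBody b"

lemma hvars_hf_with_body [simp]: "hvars (hf_with_body p b) = hvars p"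
  by (induction p) auto

lemma hbody_hf_with_body [simp]: "hbody (hf_with_body p b) = b"
  by (induction p) auto

lemma hclosed_in_iff: "hclosed_in lok B p \<longleftrightarrow> mwf lok (B \<union> hvars p) (hbody p) \<and> mfv (hbody p) = {}"
  by (induction p arbitrary: B) (auto simp: insert_commute)

lemma hsat_hf_with_body:
  assumes "dom \<Pi> \<union> hvars p \<subseteq> H"
    and "\<forall>\<Pi>'. dom \<Pi>' \<subseteq> H \<longrightarrow>
      ((\<lambda>_. 0) \<in> msem sN \<Pi>' (\<lambda>_. {}) (hbody p) \<longleftrightarrow> (\<lambda>_. 0) \<in> msem sN' \<Pi>' (\<lambda>_. {}) b)"
  shows "hsat sN T \<Pi> p \<longleftrightarrow> hsat sN' T \<Pi> (hf_with_body p b)"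
  using assms
proof (induction p arbitrary: \<Pi>)
  case (HEx \<pi> q)
  then have "hsat sN T (\<Pi>(\<pi> := Some tr)) q \<longleftrightarrow> hsat sN' T (\<Pi>(\<pi> := Some tr)) (hf_with_body q b)" for tr
    by (intro HEx.IH) (auto simp: dom_def)
  then show ?case by simp
next
  case (HAll \<pi> q)
  then have "hsat sN T (\<Pi>(\<pi> := Some tr)) q \<longleftrightarrow> hsat sN' T (\<Pi>(\<pi> := Some tr)) (hf_with_body q b)" for tr
    by (intro HAll.IH) (auto simp: dom_def)
  then show ?case by simp
next
  case (HBody q)
  then show ?case by simp
qed

theorem lemma6p5:
  fixes \<phi> :: "('ap::finite) mumbling_hf"
  assumes "mumbling_closed \<phi>" and "unique_mumbling \<phi>"
  shows "\<exists>\<phi>' :: 'ap stuttering_hf. stuttering_closed \<phi>' \<and> unique_stuttering \<phi>' \<and>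
           (\<forall>T :: 'ap trace set. mumbling_models T \<phi> \<longleftrightarrow> stuttering_models T \<phi>')"
proof -
  define \<psi> where "\<psi> = hbody \<phi>"
  define H where "H = hvars \<phi>"
  have wf: "mwf tf_ok H \<psi>" "mfv \<psi> = {}"
    using assms(1) unfolding mumbling_closed_def hclosed_def hclosed_in_iff \<psi>_def H_def by auto
  have unique: "\<forall>D\<in>mnexts \<psi>. \<forall>\<pi>\<in>H. D \<pi> = next_map \<psi> \<pi>"
    using assms(2) unfolding unique_mumbling_def hunique_def \<psi>_def H_def
    by (intro mnexts_eq_next_map) blast
  define \<phi>' where "\<phi>' = hf_with_body \<phi> (stutter_transl \<psi>)"
  have "stuttering_closed \<phi>'"
    using mwf_stutter_transl[OF wf] mfv_stutter_transl[OF wf(2)]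
    unfolding stuttering_closed_def hclosed_def hclosed_in_iff \<phi>'_def H_def by simp
  moreover have "unique_stuttering \<phi>'"
    using mnexts_stutter_transl unfolding unique_stuttering_def hunique_def \<phi>'_def by auto
  moreover have "mumbling_models T \<phi> \<longleftrightarrow> stuttering_models T \<phi>'" for T
    unfolding mumbling_models_def stuttering_models_def hmodels_def \<phi>'_def
    by (rule hsat_hf_with_body)
      (use msem_stutter_transl_iff[OF wf unique] in \<open>auto simp: H_def \<psi>_def\<close>)
  ultimately show ?thesis by blast
qed

end
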